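(* Fix any integer $d\geq 3$, any prime power $q$, and any group $\Gamma$. Let $I=\{i_0<i_1<i_2\}\subseteq[d-1]$ and let $s$ be a face of $\mathcal{B}^{d,[d-1]\setminus I}_q$ (i.e. a chain of subspaces of $\mathbb{F}_q^d$ with dimensions outside $I$). Assume that (1) $2i_0\leq i_1$, or there is a subspace $V\in s$ with $i_0<\dim V<i_1$; and (2) either $2i_1-i_0\leq i_2$, or $2i_1-\dim(V)\leq i_2$ where $V\in s$ is a subspace with $i_0<\dim V<i_1$, or there is a subspace $W\in s$ with $i_1<\dim W<i_2$. Then the complex $\mathcal{B}^{d,I}_{q,s}$ is a $1$-coboundary expander with $h^1(\mathcal{B}^{d,I}_{q,s},\Gamma)\geq\frac{1}{13}$.
   Context: The flags complex $\mathcal{B}^d_q$ has vertices the nonzero proper subspaces of $\mathbb{F}_q^d$ (colored by dimension) and faces the chains of such subspaces; it carries the uniform distribution on maximal chains and induced distributions on lower faces. For a set of dimensions $T$, $\mathcal{B}^{d,T}_q$ is the projection onto subspaces with dimension in $T$. $\mathcal{B}^{d,I}_{q,s}$ denotes the link of $s$ in $\mathcal{B}^d_q$ projected onto colors $I$: its faces are the chains $t$ of subspaces with dimensions in $I$ such that $s\cup t$ is a chain, with the induced (conditional) distribution. For a group $\Gamma$: $1$-cochains are functions $f$ on ordered edges with $f(u,v)=f(v,u)^{-1}$, $\delta f(u,v,w)=f(u,v)f(v,w)f(w,u)$, $\delta g(u,v)=g(u)g(v)^{-1}$; $Z^1=\ker\delta$, $B^1=\{\delta g\}$; $h^1=\min_{f\notin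 Z^1}\mathrm{wt}(\delta f)/\mathrm{dist}(f,Z^1)$, with $\mathrm{wt}$ the triangle-measure where $\delta f\neq\mathrm{id}$ and $\mathrm{dist}$ the edge-measure distance; a $1$-coboundary expander additionally has $Z^1=B^1$. *)

theory Defs
  imports "HOL-Analysis.Analysis"
begin

text \<open>Flags complex over F_q^d, modelled with a finite field type 'k (q = CARD('k)) and
  vectors in 'k^'n, so that d = CARD('n).\<close>

definition sub_vertex :: "('k::field ^ 'n) set \<Rightarrow> bool" where
  "sub_vertex V \<longleftrightarrow> vec.subspace V \<and> 0 < vec.dim V \<and> vec.dim V < CARD('n)"

definition is_chain :: "('k::field ^ 'n) set set \<Rightarrow> bool" where
  "is_chain S \<longleftrightarrow> (\<forall>V\<in>S. sub_vertex V) \<and> (\<forall>U\<in>S. \<forall>V\<in>S. U \<subseteq> V \<or> V \<subseteq> U)"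

text \<open>Maximal chains (complete flags), carrying the uniform distribution.\<close>
definition max_chains :: "('k::field ^ 'n) set set set" where
  "max_chains = {F. is_chain F \<and> (\<forall>G. is_chain G \<and> F \<subseteq> G \<longrightarrow> G = F)}"

definition at_dim :: "('k::field ^ 'n) set set \<Rightarrow> nat \<Rightarrow> ('k ^ 'n) set" where
  "at_dim F i = (THE V. V \<in> F \<and> vec.dim V = i)"

text \<open>Maximal chains containing s; the distribution of the link of s is the uniform
  distribution on these (conditioning), projected to the colours I.\<close>
definition link_flags :: "('k::field ^ 'n) set set \<Rightarrow> ('k ^ 'n) set set set" where
  "link_flags s = {F \<in> max_chains. s \<subseteq> F}"

definition link_prob :: "('k::field ^ 'n) set set \<Rightarrow> (('k ^ 'n) set set \<Rightarrow> bool) \<Rightarrow> real" where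
  "link_prob s P = real (card {F \<in> link_flags s. P F}) / real (card (link_flags s))"

definition link_face :: "('k::field ^ 'n) set set \<Rightarrow> nat set \<Rightarrow> ('k ^ 'n) set set \<Rightarrow> bool" where
  "link_face s I t \<longleftrightarrow> (\<forall>V\<in>t. vec.dim V \<in> I) \<and> is_chain (s \<union> t)"

definition link_edge :: "('k::field ^ 'n) set set \<Rightarrow> nat set \<Rightarrow> ('k ^ 'n) set \<Rightarrow> ('k ^ 'n) set \<Rightarrow> bool" where
  "link_edge s I u v \<longleftrightarrow> u \<noteq> v \<and> link_face s I {u, v}"

definition link_triangle :: "('k::field ^ 'n) set set \<Rightarrow> nat set \<Rightarrow> ('k ^ 'n) set \<Rightarrow> ('k ^ 'n) set \<Rightarrow> ('k ^ 'n) set \<Rightarrow> bool" where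
  "link_triangle s I u v w \<longleftrightarrow> u \<noteq> v \<and> v \<noteq> w \<and> u \<noteq> w \<and> link_face s I {u, v, w}"

text \<open>1-cochains with values in a group (written additively, not necessarily abelian):
  f u v = (f v u)^{-1} on (ordered) edges.\<close>
definition cochains1 :: "('k::field ^ 'n) set set \<Rightarrow> nat set \<Rightarrow> (('k ^ 'n) set \<Rightarrow> ('k ^ 'n) set \<Rightarrow> 'g::group_add) set" where
  "cochains1 s I = {f. \<forall>u v. link_edge s I u v \<longrightarrow> f u v = - f v u}"

definition cob1 :: "(('k::field ^ 'n) set \<Rightarrow> ('k ^ 'n) set \<Rightarrow> 'g::group_add) \<Rightarrow> ('k ^ 'n) set \<Rightarrow> ('k ^ 'n) set \<Rightarrow> ('k ^ 'n) set \<Rightarrow> 'g" where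
  "cob1 f u v w = f u v + f v w + f w u"

definition cocycles1 :: "('k::field ^ 'n) set set \<Rightarrow> nat set \<Rightarrow> (('k ^ 'n) set \<Rightarrow> ('k ^ 'n) set \<Rightarrow> 'g::group_add) set" where
  "cocycles1 s I = {f \<in> cochains1 s I. \<forall>u v w. link_triangle s I u v w \<longrightarrow> cob1 f u v w = 0}"

definition coboundaries1 :: "('k::field ^ 'n) set set \<Rightarrow> nat set \<Rightarrow> (('k ^ 'n) set \<Rightarrow> ('k ^ 'n) set \<Rightarrow> 'g::group_add) set" where
  "coboundaries1 s I = {f \<in> cochains1 s I. \<exists>g. \<forall>u v. link_edge s I u v \<longrightarrow> f u v = g u - g v}"

text \<open>Triangle measure of the set where delta f is not the identity; the top faces of the
  link complex are the I-parts (F_{i0},F_{i1},F_{i2}) of a random flag F containing s.\<close>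
definition wt_cob :: "('k::field ^ 'n) set set \<Rightarrow> nat \<Rightarrow> nat \<Rightarrow> nat \<Rightarrow> (('k ^ 'n) set \<Rightarrow> ('k ^ 'n) set \<Rightarrow> 'g::group_add) \<Rightarrow> real" where
  "wt_cob s i0 i1 i2 f = link_prob s (\<lambda>F. cob1 f (at_dim F i0) (at_dim F i1) (at_dim F i2) \<noteq> 0)"

text \<open>Edge-measure distance: the edge distribution is induced from the top faces by taking
  a uniformly random edge of a random triangle.\<close>
definition edge_dist :: "('k::field ^ 'n) set set \<Rightarrow> nat \<Rightarrow> nat \<Rightarrow> nat \<Rightarrow> (('k ^ 'n) set \<Rightarrow> ('k ^ 'n) set \<Rightarrow> 'g) \<Rightarrow> (('k ^ 'n) set \<Rightarrow> ('k ^ 'n) set \<Rightarrow> 'g) \<Rightarrow> real" where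
  "edge_dist s i0 i1 i2 f g = (1/3) *
     (link_prob s (\<lambda>F. f (at_dim F i0) (at_dim F i1) \<noteq> g (at_dim F i0) (at_dim F i1))
    + link_prob s (\<lambda>F. f (at_dim F i0) (at_dim F i2) \<noteq> g (at_dim F i0) (at_dim F i2))
    + link_prob s (\<lambda>F. f (at_dim F i1) (at_dim F i2) \<noteq> g (at_dim F i1) (at_dim F i2)))"

definition dist_Z1 :: "('k::field ^ 'n) set set \<Rightarrow> nat \<Rightarrow> nat \<Rightarrow> nat \<Rightarrow> (('k ^ 'n) set \<Rightarrow> ('k ^ 'n) set \<Rightarrow> 'g::group_add) \<Rightarrow> real" where
  "dist_Z1 s i0 i1 i2 f = Inf (edge_dist s i0 i1 i2 f ` cocycles1 s {i0, i1, i2})"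

text \<open>The link complex B^{d,I}_{q,s} (I = {i0,i1,i2}) is a 1-coboundary expander over the
  group 'g with h^1 \<ge> c: Z^1 = B^1, and wt(delta f) \<ge> c * dist(f, Z^1) for every
  cochain f not in Z^1 (i.e. the minimum of the ratios is at least c).\<close>
definition link_cob_expander :: "('k::field ^ 'n) set set \<Rightarrow> nat \<Rightarrow> nat \<Rightarrow> nat \<Rightarrow> 'g::group_add itself \<Rightarrow> real \<Rightarrow> bool" where
  "link_cob_expander s i0 i1 i2 G c \<longleftrightarrow>
     (cocycles1 s {i0, i1, i2} :: (('k ^ 'n) set \<Rightarrow> ('k ^ 'n) set \<Rightarrow> 'g) set)
        = coboundaries1 s {i0, i1, i2}
   \<and> (\<forall>f :: ('k ^ 'n) set \<Rightarrow> ('k ^ 'n) set \<Rightarrow> 'g.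
        f \<in> cochains1 s {i0, i1, i2} \<and> f \<notin> cocycles1 s {i0, i1, i2} \<longrightarrow>
        wt_cob s i0 i1 i2 f \<ge> c * dist_Z1 s i0 i1 i2 f)"

end

theory Submission
  imports Defs
begin

text \<open>Fix an apex vertex of colour i0 and, for every vertex x of the link, a path of
  length at most three from the apex to x; summing a cochain f along these paths gives a potential
  cone f. For every edge x y the identity cone f x + f x y = cone f y follows from the cocycle
  condition on a fixed list of at most 7, 12 or 20 triangles, according to the colours of x and y.
  Building these triangles needs two vertices of colour i0 (resp. i1) meeting suitably to lie in a
  common vertex of colour i1 (resp. i2), which is what the conditions on the colours guarantee.
  In particular every cocycle is the coboundary of - cone f, so Z^1 = B^1.

  For an arbitrary cochain f, move the apex and all paths by a uniformly random element h of the
  stabilizer of s in GL_d. The coboundary of the moved cone potential differs from f on an edge only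
  if one of the associated triangles is violated, and since the stabilizer acts transitively on the
  maximal flags through s, each triangle is violated with probability wt(delta f). Averaging over h
  gives dist(f, Z^1) <= (7 + 12 + 20) / 3 * wt(delta f) = 13 wt(delta f).\<close>

section \<open>Subspaces comparable with a chain\<close>

context finite_dimensional_vector_space
begin

lemma subset_if_comparable_dim_less:
  assumes "U \<subseteq> V \<or> V \<subseteq> U" "dim U < dim V"
  shows "U \<subseteq> V"
  using assms dim_subset[of V U] by auto

lemma exists_subspace_between:
  assumes "subspace A" "subspace B" "A \<subseteq> B" "dim A \<le> k" "k \<le> dim B"
  obtains C where "subspace C" "A \<subseteq> C" "C \<subseteq> B" "dim C = k"
proof -
  have "\<exists>C. subspace C \<and> A \<subseteq> C \<and> C \<subseteq> B \<and> dim C = k"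
    using assms
  proof (induction "k - dim A" arbitrary: A)
    case 0
    then show ?case by (intro exI[of _ A]) auto
  next
    case (Suc m)
    then have "A \<noteq> B"
      by auto
    then obtain x where x: "x \<in> B" "x \<notin> A"
      using Suc.prems(3) by blast
    let ?A = "span (insert x A)"
    have "x \<notin> span A"
      using x Suc.prems(1) by (simp add: span_eq_iff[THEN iffD2])
    then have "dim ?A = dim A + 1"
      by (simp add: dim_insert)
    then have "m = k - dim ?A" "dim ?A \<le> k"
      using Suc.hyps(2) by linarith+
    moreover have "?A \<subseteq> B"
      using Suc.prems x by (intro span_minimal) auto
    ultimately obtain C where "subspace C" "?A \<subseteq> C" "C \<subseteq> B" "dim C = k"
      using Suc.hyps(1)[of ?A] Suc.prems(2,5) subspace_span by blast
    moreover have "A \<subseteq> ?A"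
      by (meson subset_insertI span_superset order_trans)
    ultimately show ?case by blast
  qed
  then show ?thesis using that by blast
qed

lemma dim_span_Un_add_dim_Int:
  assumes "subspace A" "subspace B"
  shows "dim (span (A \<union> B)) + dim (A \<inter> B) = dim A + dim B"
proof -
  have span_eq: "span A = A" "span B = B"
    using assms by (simp_all add: span_eq_iff)
  show ?thesis
    using dim_sums_Int[OF assms] unfolding span_Un span_eq by simp
qed

end

definition subspace_chain :: "('k::field ^ 'n) set set \<Rightarrow> bool" where
  "subspace_chain S \<longleftrightarrow> finite S \<and> subset.chain (Collect vec.subspace) S"

definition chain_floor :: "('k::field ^ 'n) set set \<Rightarrow> nat \<Rightarrow> ('k ^ 'n) set" where
  "chain_floor S k = vec.span (\<Union>{V\<in>S. vec.dim V < k})"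

definition chain_ceiling :: "('k::field ^ 'n) set set \<Rightarrow> nat \<Rightarrow> ('k ^ 'n) set" where
  "chain_ceiling S k = \<Inter>{V\<in>S. k < vec.dim V}"

lemma subset_chain_floor: "V \<in> S \<Longrightarrow> vec.dim V < k \<Longrightarrow> V \<subseteq> chain_floor S k"
  unfolding chain_floor_def by (rule order_trans[OF _ vec.span_superset]) auto

lemma chain_floor_mono: "k \<le> k' \<Longrightarrow> chain_floor S k \<subseteq> chain_floor S k'"
  unfolding chain_floor_def by (intro vec.span_mono) auto

lemma chain_ceiling_subset: "V \<in> S \<Longrightarrow> k < vec.dim V \<Longrightarrow> chain_ceiling S k \<subseteq> V"
  unfolding chain_ceiling_def by auto

lemma subspace_chain_floor [simp]: "vec.subspace (chain_floor S k)"
  unfolding chain_floor_def by simp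

lemma subspace_chain_ceiling: "subspace_chain S \<Longrightarrow> vec.subspace (chain_ceiling S k)"
  unfolding chain_ceiling_def subspace_chain_def subset_chain_def by (intro vec.subspace_Inter) auto

lemma dim_chain_floor_less:
  assumes "subspace_chain S" "0 < k"
  shows "vec.dim (chain_floor S k) < k"
proof (cases "{V\<in>S. vec.dim V < k} = {}")
  case True
  then have empty: "\<Union>{V\<in>S. vec.dim V < k} = {}"
    by blast
  show ?thesis
    using assms(2) unfolding chain_floor_def empty by simp
next
  case False
  have "\<Union>{V\<in>S. vec.dim V < k} \<in> {V\<in>S. vec.dim V < k}"
    using assms(1) False unfolding subspace_chain_def subset_chain_def
    by (intro Union_in_chain[of _ UNIV]) (auto simp: subset_chain_def)
  then show ?thesis
    by (simp add: chain_floor_def)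
qed

lemma chain_ceiling_cases:
  assumes "subspace_chain S"
  obtains "chain_ceiling S k = UNIV" "\<forall>V\<in>S. vec.dim V \<le> k"
    | "chain_ceiling S k \<in> S" "k < vec.dim (chain_ceiling S k)"
proof (cases "{V\<in>S. k < vec.dim V} = {}")
  case True
  moreover have "chain_ceiling S k = UNIV"
    unfolding chain_ceiling_def True by simp
  ultimately show ?thesis
    using that(1) by (auto simp: not_less)
next
  case False
  have "\<Inter>{V\<in>S. k < vec.dim V} \<in> {V\<in>S. k < vec.dim V}"
    using assms False unfolding subspace_chain_def
    by (intro Inter_in_chain[of _ UNIV]) (auto simp: subset_chain_def)
  then show ?thesis
    using that(2) by (simp add: chain_ceiling_def)
qed

lemma dim_chain_ceiling_greater:
  assumes "subspace_chain S" "k < CARD('n)"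
  shows "k < vec.dim (chain_ceiling S k :: ('k::field ^ 'n) set)"
  using assms by (cases rule: chain_ceiling_cases[OF assms(1), of k]) (auto simp: card_cart_basis)

lemma chain_floor_subset_ceiling:
  assumes "subspace_chain S" "k \<le> k'"
  shows "chain_floor S k \<subseteq> chain_ceiling S k'"
proof -
  have "chain_floor S k \<subseteq> W" if W: "W \<in> S" "k' < vec.dim W" for W
    unfolding chain_floor_def
  proof (intro vec.span_minimal Union_least)
    show "vec.subspace W"
      using assms(1) W(1) by (auto simp: subspace_chain_def subset_chain_def)
    fix V assume "V \<in> {V\<in>S. vec.dim V < k}"
    then show "V \<subseteq> W"
      using assms W by (intro vec.subset_if_comparable_dim_less)
        (auto simp: subspace_chain_def subset_chain_def)
  qed
  then show ?thesis
    unfolding chain_ceiling_def by blast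
qed

lemma comparable_iff_between_floor_ceiling:
  assumes "vec.subspace x" "vec.dim x = k" "\<forall>V\<in>S. vec.dim V \<noteq> k"
  shows "(\<forall>V\<in>S. V \<subseteq> x \<or> x \<subseteq> V) \<longleftrightarrow> chain_floor S k \<subseteq> x \<and> x \<subseteq> chain_ceiling S k"
proof
  assume cmp: "\<forall>V\<in>S. V \<subseteq> x \<or> x \<subseteq> V"
  show "chain_floor S k \<subseteq> x \<and> x \<subseteq> chain_ceiling S k"
  proof -
    have "V \<subseteq> x" if "V \<in> S" "vec.dim V < k" for V
      using that cmp assms(2) by (intro vec.subset_if_comparable_dim_less) (blast, simp)
    moreover have "x \<subseteq> V" if "V \<in> S" "k < vec.dim V" for V
      using that cmp assms(2) by (intro vec.subset_if_comparable_dim_less) (blast, simp)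
    ultimately show ?thesis
      unfolding chain_floor_def chain_ceiling_def using assms(1)
      by (intro conjI vec.span_minimal Union_least Inter_greatest) auto
  qed
next
  assume between: "chain_floor S k \<subseteq> x \<and> x \<subseteq> chain_ceiling S k"
  show "\<forall>V\<in>S. V \<subseteq> x \<or> x \<subseteq> V"
  proof
    fix V assume "V \<in> S"
    then consider "vec.dim V < k" | "k < vec.dim V"
      using assms(3) by fastforce
    then show "V \<subseteq> x \<or> x \<subseteq> V"
    proof cases
      case 1
      then show ?thesis
        using subset_chain_floor[OF \<open>V \<in> S\<close>] between by blast
    next
      case 2
      then show ?thesis
        using chain_ceiling_subset[OF \<open>V \<in> S\<close>] between by blast
    qed
  qed
qed

lemma exists_subspace_between_floor_ceiling:
  assumes "subspace_chain S" "0 < k" "k < CARD('n)"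
  obtains x :: "('k::field ^ 'n) set"
  where "vec.subspace x" "vec.dim x = k" "chain_floor S k \<subseteq> x" "x \<subseteq> chain_ceiling S k"
proof (rule vec.exists_subspace_between[OF subspace_chain_floor subspace_chain_ceiling[OF assms(1)]
      chain_floor_subset_ceiling[OF assms(1) order_refl]])
  show "vec.dim (chain_floor S k) \<le> k"
    using dim_chain_floor_less[OF assms(1,2)] by simp
  show "k \<le> vec.dim (chain_ceiling S k)"
    using dim_chain_ceiling_greater[OF assms(1,3)] by simp
qed (use that in blast)

section \<open>Maximal chains and the stabilizer of a face\<close>

lemma subspace_chain_if_is_chain: "is_chain (F :: ('k::{field,finite} ^ 'n) set set) \<Longrightarrow> subspace_chain F"
  unfolding is_chain_def subspace_chain_def subset_chain_def sub_vertex_def by auto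

lemma is_chain_eq_if_dim_eq:
  assumes "is_chain F" "U \<in> F" "V \<in> F" "vec.dim U = vec.dim V"
  shows "U = V"
proof -
  have "U \<subseteq> V \<or> V \<subseteq> U" "vec.subspace U" "vec.subspace V"
    using assms unfolding is_chain_def sub_vertex_def by auto
  then show ?thesis
    using vec.subspace_dim_equal[of U V] vec.subspace_dim_equal[of V U] assms(4) by auto
qed

lemma at_dim_eq:
  assumes "is_chain F" "V \<in> F" "vec.dim V = i"
  shows "at_dim F i = V"
  unfolding at_dim_def using assms is_chain_eq_if_dim_eq[OF assms(1)] by (intro the_equality) auto

lemma max_chain_has_dim:
  fixes F :: "('k::{field,finite} ^ 'n) set set"
  assumes F: "F \<in> max_chains" and i: "0 < i" "i < CARD('n)"
  shows "\<exists>V\<in>F. vec.dim V = i"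
proof (rule ccontr)
  assume no_dim: "\<not> (\<exists>V\<in>F. vec.dim V = i)"
  have ch: "is_chain F"
    using F by (simp add: max_chains_def)
  obtain x where x: "vec.subspace x" "vec.dim x = i"
    "chain_floor F i \<subseteq> x" "x \<subseteq> chain_ceiling F i"
    using exists_subspace_between_floor_ceiling[OF subspace_chain_if_is_chain[OF ch] i] .
  then have "\<forall>V\<in>F. V \<subseteq> x \<or> x \<subseteq> V"
    using comparable_iff_between_floor_ceiling[of x i F] no_dim by blast
  then have "is_chain (insert x F)"
    using ch x i unfolding is_chain_def sub_vertex_def by auto
  then have "insert x F = F"
    using F unfolding max_chains_def by blast
  then show False
    using no_dim x by auto
qed

lemma at_dim_in_max_chain:
  fixes F :: "('k::{field,finite} ^ 'n) set set"
  assumes "F \<in> max_chains" "0 < i" "i < CARD('n)"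
  shows "at_dim F i \<in> F" "vec.dim (at_dim F i) = i"
proof -
  obtain V where V: "V \<in> F" "vec.dim V = i"
    using max_chain_has_dim[OF assms] by blast
  have "is_chain F"
    using assms(1) by (simp add: max_chains_def)
  then have "at_dim F i = V"
    using V by (rule at_dim_eq)
  then show "at_dim F i \<in> F" "vec.dim (at_dim F i) = i"
    using V by simp_all
qed

lemma dim_mem_max_chain:
  fixes F :: "('k::field ^ 'n) set set"
  assumes "F \<in> max_chains" "V \<in> F"
  shows "0 < vec.dim V" "vec.dim V < CARD('n)"
proof -
  have "is_chain F"
    using assms(1) by (simp add: max_chains_def)
  then show "0 < vec.dim V" "vec.dim V < CARD('n)"
    using assms(2) by (auto simp: is_chain_def sub_vertex_def)
qed

lemma max_chainsI:
  fixes F :: "('k::{field,finite} ^ 'n) set set"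
  assumes ch: "is_chain F" and all_dims: "\<And>i. 0 < i \<Longrightarrow> i < CARD('n) \<Longrightarrow> \<exists>V\<in>F. vec.dim V = i"
  shows "F \<in> max_chains"
proof -
  have "V \<in> F" if G: "is_chain G" "F \<subseteq> G" and V: "V \<in> G" for G V
  proof -
    have "0 < vec.dim V" "vec.dim V < CARD('n)"
      using G(1) V by (auto simp: is_chain_def sub_vertex_def)
    then obtain W where "W \<in> F" "vec.dim W = vec.dim V"
      using all_dims by blast
    then show ?thesis
      using is_chain_eq_if_dim_eq[OF G(1), of W V] G V by auto
  qed
  then show ?thesis
    using ch unfolding max_chains_def by auto
qed

lemma ex_max_chain_superset:
  fixes T :: "('k::{field,finite} ^ 'n) set set"
  assumes "is_chain T"
  obtains F where "F \<in> max_chains" "T \<subseteq> F"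
proof -
  let ?A = "{G. is_chain G \<and> T \<subseteq> G}"
  have "finite ?A" "?A \<noteq> {}"
    using assms by auto
  then obtain m where m: "m \<in> ?A" "\<forall>G\<in>?A. m \<subseteq> G \<longrightarrow> m = G"
    using finite_has_maximal[of ?A] by blast
  have "m \<in> max_chains"
    unfolding max_chains_def
  proof (intro CollectI conjI allI impI)
    show "is_chain m"
      using m(1) by simp
    fix G assume "is_chain G \<and> m \<subseteq> G"
    then show "G = m"
      using m by (metis (mono_tags, lifting) mem_Collect_eq order_trans)
  qed
  then show ?thesis
    using that m(1) by blast
qed

abbreviation vec_linear :: "('k::field ^ 'n \<Rightarrow> 'k ^ 'n) \<Rightarrow> bool" where
  "vec_linear h \<equiv> Vector_Spaces.linear (*s) (*s) h"

definition map_chain :: "('k::field ^ 'n \<Rightarrow> 'k ^ 'n) \<Rightarrow> ('k ^ 'n) set set \<Rightarrow> ('k ^ 'n) set set" where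
  "map_chain h F = (\<lambda>V. h ` V) ` F"

definition stabilizer :: "('k::field ^ 'n) set set \<Rightarrow> ('k ^ 'n \<Rightarrow> 'k ^ 'n) set" where
  "stabilizer s = {h. vec_linear h \<and> bij h \<and> (\<forall>V\<in>s. h ` V = V)}"

lemma dim_image_linear_inj:
  fixes h :: "'k::field ^ 'n \<Rightarrow> 'k ^ 'n"
  assumes "vec_linear h" "inj h"
  shows "vec.dim (h ` V) = vec.dim V"
  using vec.dim_image_eq[OF assms(1) inj_on_subset[OF assms(2) subset_UNIV]] .

lemma is_chain_map_chain:
  fixes h :: "'k::field ^ 'n \<Rightarrow> 'k ^ 'n"
  assumes "vec_linear h" "inj h" "is_chain F"
  shows "is_chain (map_chain h F)"
  unfolding is_chain_def
proof (intro conjI ballI)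
  fix W assume "W \<in> map_chain h F"
  then obtain V where "V \<in> F" "W = h ` V"
    by (auto simp: map_chain_def)
  then show "sub_vertex W"
    using assms vec.linear_subspace_image[OF assms(1)] dim_image_linear_inj[OF assms(1,2)]
    by (auto simp: is_chain_def sub_vertex_def)
next
  fix U W assume "U \<in> map_chain h F" "W \<in> map_chain h F"
  then obtain U' W' where "U' \<in> F" "W' \<in> F" "U = h ` U'" "W = h ` W'"
    by (auto simp: map_chain_def)
  then show "U \<subseteq> W \<or> W \<subseteq> U"
    using assms(3) unfolding is_chain_def by (metis image_mono)
qed

lemma at_dim_map_chain:
  fixes h :: "'k::{field,finite} ^ 'n \<Rightarrow> 'k ^ 'n"
  assumes "vec_linear h" "inj h" "F \<in> max_chains" "0 < i" "i < CARD('n)"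
  shows "at_dim (map_chain h F) i = h ` at_dim F i"
proof (rule at_dim_eq)
  show "is_chain (map_chain h F)"
    using is_chain_map_chain[OF assms(1,2)] assms(3) by (simp add: max_chains_def)
  show "h ` at_dim F i \<in> map_chain h F" "vec.dim (h ` at_dim F i) = i"
    using at_dim_in_max_chain[OF assms(3-5)] dim_image_linear_inj[OF assms(1,2)]
    by (auto simp: map_chain_def)
qed

lemma max_chains_map_chain:
  fixes h :: "'k::{field,finite} ^ 'n \<Rightarrow> 'k ^ 'n"
  assumes "vec_linear h" "inj h" "F \<in> max_chains"
  shows "map_chain h F \<in> max_chains"
proof (rule max_chainsI)
  show "is_chain (map_chain h F)"
    using is_chain_map_chain[OF assms(1,2)] assms(3) by (simp add: max_chains_def)
  fix i assume i: "0 < i" "i < CARD('n)"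
  have "h ` at_dim F i \<in> map_chain h F"
    unfolding map_chain_def using at_dim_in_max_chain(1)[OF assms(3) i] by (rule imageI)
  moreover have "vec.dim (h ` at_dim F i) = i"
    using at_dim_in_max_chain(2)[OF assms(3) i] dim_image_linear_inj[OF assms(1,2)] by simp
  ultimately show "\<exists>V\<in>map_chain h F. vec.dim V = i"
    by blast
qed

lemma stabilizer_linear: "h \<in> stabilizer s \<Longrightarrow> vec_linear h"
  and stabilizer_inj: "h \<in> stabilizer s \<Longrightarrow> inj h"
  and stabilizer_fix: "h \<in> stabilizer s \<Longrightarrow> V \<in> s \<Longrightarrow> h ` V = V"
  unfolding stabilizer_def by (auto simp: bij_def)

lemma id_in_stabilizer: "id \<in> stabilizer s"
  unfolding stabilizer_def using vec.linear_id by simp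

lemma comp_in_stabilizer:
  assumes "h \<in> stabilizer s" "g \<in> stabilizer s"
  shows "h \<circ> g \<in> stabilizer s"
proof -
  have "(h \<circ> g) ` V = V" if "V \<in> s" for V
  proof -
    have "(h \<circ> g) ` V = h ` g ` V"
      by (rule image_comp[symmetric])
    also have "\<dots> = V"
      using assms that by (simp only: stabilizer_fix)
    finally show ?thesis .
  qed
  then show ?thesis
    using assms Vector_Spaces.linear_compose[of "(*s)" "(*s)" g "(*s)" h] bij_comp[of g h]
    unfolding stabilizer_def by simp
qed

lemma map_chain_comp: "map_chain (h \<circ> g) F = map_chain h (map_chain g F)"
  unfolding map_chain_def by (simp add: image_comp image_image)

lemma map_chain_link_flags:
  fixes h :: "'k::{field,finite} ^ 'n \<Rightarrow> 'k ^ 'n"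
  assumes "h \<in> stabilizer s" "F \<in> link_flags s"
  shows "map_chain h F \<in> link_flags s"
proof -
  have "V \<in> map_chain h F" if "V \<in> s" for V
  proof -
    have "V \<in> F" "h ` V = V"
      using that assms stabilizer_fix[OF assms(1)] by (auto simp: link_flags_def)
    then show ?thesis
      unfolding map_chain_def using image_eqI[of V "\<lambda>V. h ` V" V F] by simp
  qed
  then show ?thesis
    using max_chains_map_chain[OF stabilizer_linear[OF assms(1)] stabilizer_inj[OF assms(1)]] assms(2)
    by (auto simp: link_flags_def)
qed

lemma finite_link_flags: "finite (link_flags (s :: ('k::{field,finite} ^ 'n) set set))"
  by simp

lemma finite_stabilizer: "finite (stabilizer (s :: ('k::{field,finite} ^ 'n) set set))"
  by simp

lemma card_link_flags_pos:
  fixes s :: "('k::{field,finite} ^ 'n) set set"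
  assumes "is_chain s"
  shows "0 < card (link_flags s)"
proof -
  obtain F where "F \<in> max_chains" "s \<subseteq> F"
    by (rule ex_max_chain_superset[OF assms])
  then have "F \<in> link_flags s"
    by (simp add: link_flags_def)
  then show ?thesis
    using finite_link_flags card_gt_0_iff by blast
qed

lemma card_stabilizer_pos: "0 < card (stabilizer (s :: ('k::{field,finite} ^ 'n) set set))"
  using id_in_stabilizer finite_stabilizer card_gt_0_iff by blast

lemma bij_betw_map_chain_link_flags:
  fixes h :: "'k::{field,finite} ^ 'n \<Rightarrow> 'k ^ 'n"
  assumes "h \<in> stabilizer s"
  shows "bij_betw (map_chain h) (link_flags s) (link_flags s)"
proof (rule bij_betw_imageI)
  have "inj (image h)"
    using inj_on_image_Pow[OF stabilizer_inj[OF assms]] by simp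
  then have "inj (image (image h))"
    using inj_on_image_Pow[of "image h" UNIV] by simp
  then show inj: "inj_on (map_chain h) (link_flags s)"
    unfolding map_chain_def[abs_def] by (rule inj_on_subset[OF _ subset_UNIV])
  have "map_chain h ` link_flags s \<subseteq> link_flags s"
    using map_chain_link_flags[OF assms] by blast
  then show "map_chain h ` link_flags s = link_flags s"
    by (rule endo_inj_surj[OF finite_link_flags _ inj])
qed

definition flag_space :: "('k::field ^ 'n) set set \<Rightarrow> nat \<Rightarrow> ('k ^ 'n) set" where
  "flag_space F i = (if i = 0 then {0} else if i < CARD('n) then at_dim F i else UNIV)"

lemma flag_space_at_dim: "0 < i \<Longrightarrow> i < CARD('n) \<Longrightarrow> flag_space (F :: ('k::field ^ 'n) set set) i = at_dim F i"
  by (simp add: flag_space_def)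

lemma flag_space_subspace_dim:
  fixes F :: "('k::{field,finite} ^ 'n) set set"
  assumes F: "F \<in> max_chains" and i: "i \<le> CARD('n)"
  shows "vec.subspace (flag_space F i)" "vec.dim (flag_space F i) = i"
proof -
  consider "i = 0" | "0 < i" "i < CARD('n)" | "i = CARD('n)" "i \<noteq> 0"
    using i by linarith
  then have "vec.subspace (flag_space F i) \<and> vec.dim (flag_space F i) = i"
  proof cases
    case 1
    then show ?thesis
      by (simp add: flag_space_def vec.subspace_single_0)
  next
    case 2
    moreover have "is_chain F"
      using F by (simp add: max_chains_def)
    ultimately show ?thesis
      using at_dim_in_max_chain[OF F 2] by (auto simp: flag_space_def is_chain_def sub_vertex_def)
  next
    case 3
    then show ?thesis
      by (simp add: flag_space_def card_cart_basis)
  qed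
  then show "vec.subspace (flag_space F i)" "vec.dim (flag_space F i) = i"
    by simp_all
qed

lemma flag_space_mono:
  fixes F :: "('k::{field,finite} ^ 'n) set set"
  assumes F: "F \<in> max_chains" and ij: "i \<le> j" "j \<le> CARD('n)"
  shows "flag_space F i \<subseteq> flag_space F j"
proof -
  consider "i = 0" | "j = CARD('n)" | "0 < i" "j < CARD('n)"
    using ij by linarith
  then show ?thesis
  proof cases
    case 1
    have "0 \<in> flag_space F j"
      using vec.subspace_0 flag_space_subspace_dim(1)[OF F ij(2)] by blast
    then show ?thesis
      using 1 by (simp add: flag_space_def[of F 0])
  next
    case 2
    then show ?thesis
      by (simp add: flag_space_def)
  next
    case 3
    show ?thesis
    proof (cases "i = j")
      case False
      have "at_dim F i \<in> F" "at_dim F j \<in> F"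
        using at_dim_in_max_chain(1)[OF F] 3 ij by auto
      moreover have "is_chain F"
        using F by (simp add: max_chains_def)
      ultimately have "at_dim F i \<subseteq> at_dim F j \<or> at_dim F j \<subseteq> at_dim F i"
        unfolding is_chain_def by blast
      moreover have "vec.dim (at_dim F i) < vec.dim (at_dim F j)"
        using at_dim_in_max_chain(2)[OF F] 3 ij False by auto
      ultimately have "at_dim F i \<subseteq> at_dim F j"
        by (rule vec.subset_if_comparable_dim_less)
      then show ?thesis
        using 3 ij by (simp add: flag_space_def)
    qed simp
  qed
qed

lemma flag_space_dim:
  fixes F :: "('k::{field,finite} ^ 'n) set set"
  assumes "F \<in> max_chains" "V \<in> F"
  shows "flag_space F (vec.dim V) = V"
proof -
  have ch: "is_chain F"
    using assms(1) by (simp add: max_chains_def)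
  then have "0 < vec.dim V" "vec.dim V < CARD('n)"
    using assms(2) by (auto simp: is_chain_def sub_vertex_def)
  then have "flag_space F (vec.dim V) = at_dim F (vec.dim V)"
    by (rule flag_space_at_dim)
  also have "\<dots> = V"
    using ch assms(2) refl by (rule at_dim_eq)
  finally show ?thesis .
qed

definition flag_basis :: "('k::field ^ 'n) set set \<Rightarrow> nat \<Rightarrow> 'k ^ 'n" where
  "flag_basis F i = (SOME x. x \<in> flag_space F (Suc i) \<and> x \<notin> flag_space F i)"

lemma flag_basis_mem:
  fixes F :: "('k::{field,finite} ^ 'n) set set"
  assumes F: "F \<in> max_chains" and i: "i < CARD('n)"
  shows "flag_basis F i \<in> flag_space F (Suc i)" "flag_basis F i \<notin> flag_space F i"
proof -
  have "flag_space F i \<noteq> flag_space F (Suc i)"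
    using flag_space_subspace_dim(2)[OF F] i by (metis Suc_leI less_imp_le n_not_Suc_n)
  moreover have "flag_space F i \<subseteq> flag_space F (Suc i)"
    using flag_space_mono[OF F, of i "Suc i"] i by simp
  ultimately have "\<exists>x. x \<in> flag_space F (Suc i) \<and> x \<notin> flag_space F i"
    by blast
  then show "flag_basis F i \<in> flag_space F (Suc i)" "flag_basis F i \<notin> flag_space F i"
    unfolding flag_basis_def by (metis (mono_tags, lifting) someI_ex)+
qed

lemma flag_basis_span:
  fixes F :: "('k::{field,finite} ^ 'n) set set"
  assumes F: "F \<in> max_chains"
  shows "i \<le> CARD('n) \<Longrightarrow> vec.span (flag_basis F ` {..<i}) = flag_space F i
    \<and> vec.independent (flag_basis F ` {..<i}) \<and> inj_on (flag_basis F) {..<i}"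
proof (induction i)
  case 0
  then show ?case
    by (simp add: flag_space_def vec.independent_empty)
next
  case (Suc i)
  let ?B = "flag_basis F ` {..<i}" and ?b = "flag_basis F i"
  have IH: "vec.span ?B = flag_space F i" "vec.independent ?B" "inj_on (flag_basis F) {..<i}"
    using Suc.IH Suc.prems by simp_all
  have new: "?b \<notin> vec.span ?B"
    unfolding IH(1) using flag_basis_mem(2)[OF F] Suc.prems by simp
  have insert: "flag_basis F ` {..<Suc i} = insert ?b ?B"
    by (simp add: lessThan_Suc)
  have independent: "vec.independent (flag_basis F ` {..<Suc i})"
    unfolding insert using new IH(2) by (rule vec.independent_insertI)
  have inj: "inj_on (flag_basis F) {..<Suc i}"
    using IH(3) new vec.span_superset[of ?B] by (auto simp: lessThan_Suc)
  have sub: "vec.span (flag_basis F ` {..<Suc i}) \<subseteq> flag_space F (Suc i)"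
  proof (rule vec.span_minimal)
    show "vec.subspace (flag_space F (Suc i))"
      using flag_space_subspace_dim[OF F Suc.prems] by simp
    show "flag_basis F ` {..<Suc i} \<subseteq> flag_space F (Suc i)"
    proof
      fix x assume "x \<in> flag_basis F ` {..<Suc i}"
      then obtain j where "j < Suc i" "x = flag_basis F j"
        by auto
      then show "x \<in> flag_space F (Suc i)"
        using flag_basis_mem(1)[OF F, of j] flag_space_mono[OF F, of "Suc j" "Suc i"] Suc.prems by auto
    qed
  qed
  have dim: "vec.dim (vec.span (flag_basis F ` {..<Suc i})) = Suc i"
  proof -
    have "vec.dim ?B = i"
      using IH(1) flag_space_subspace_dim(2)[OF F, of i] Suc.prems vec.dim_span[of ?B] by simp
    then show ?thesis
      using new unfolding insert vec.dim_span by (simp add: vec.dim_insert)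
  qed
  have "vec.span (flag_basis F ` {..<Suc i}) = flag_space F (Suc i)"
    using vec.subspace_dim_equal[OF vec.subspace_span flag_space_subspace_dim(1)[OF F Suc.prems] sub]
      dim flag_space_subspace_dim(2)[OF F Suc.prems] by simp
  then show ?case
    using independent inj by simp
qed

lemma ex_linear_map_max_chains:
  fixes F F' :: "('k::{field,finite} ^ 'n) set set"
  assumes F: "F \<in> max_chains" and F': "F' \<in> max_chains"
  shows "\<exists>h. vec_linear h \<and> bij h \<and> (\<forall>i\<le>CARD('n). h ` flag_space F i = flag_space F' i)"
proof -
  let ?n = "CARD('n)"
  let ?B = "flag_basis F ` {..<?n}"
  define h where "h = vec.construct ?B (\<lambda>x. flag_basis F' (the_inv_into {..<?n} (flag_basis F) x))"
  have basis: "vec.span ?B = flag_space F ?n" "vec.independent ?B" "inj_on (flag_basis F) {..<?n}"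
    using flag_basis_span[OF F order_refl] by simp_all
  have linear: "vec_linear h"
    unfolding h_def by (rule vec.linear_construct[OF basis(2)])
  have on_basis: "h (flag_basis F j) = flag_basis F' j" if "j < ?n" for j
  proof -
    have "flag_basis F j \<in> ?B"
      using that by simp
    then have "h (flag_basis F j) = flag_basis F' (the_inv_into {..<?n} (flag_basis F) (flag_basis F j))"
      unfolding h_def by (rule vec.construct_basis[OF basis(2)])
    then show ?thesis
      using that the_inv_into_f_f[OF basis(3)] by simp
  qed
  have image: "h ` flag_space F i = flag_space F' i" if i: "i \<le> ?n" for i
  proof -
    have "h ` flag_space F i = vec.span (h ` flag_basis F ` {..<i})"
      using conjunct1[OF flag_basis_span[OF F i]] vec.linear_span_image[OF linear] by simp
    also have "h ` flag_basis F ` {..<i} = flag_basis F' ` {..<i}"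
      using on_basis i by (force simp: image_image intro!: image_cong)
    finally show ?thesis
      using conjunct1[OF flag_basis_span[OF F' i]] by simp
  qed
  have "surj h"
    using image[of ?n] by (simp add: flag_space_def)
  then have "bij h"
    using vec.linear_surj_imp_inj[OF linear] by (simp add: bij_def)
  then show ?thesis
    using linear image by blast
qed

lemma map_chain_eq_if_flag_spaces:
  fixes F F' :: "('k::{field,finite} ^ 'n) set set"
  assumes F: "F \<in> max_chains" and F': "F' \<in> max_chains"
    and h: "\<forall>i\<le>CARD('n). h ` flag_space F i = flag_space F' i"
  shows "map_chain h F = F'"
proof
  show "map_chain h F \<subseteq> F'"
  proof
    fix W assume "W \<in> map_chain h F"
    then obtain V where V: "V \<in> F" "W = h ` V"
      by (auto simp: map_chain_def)
    note dim = dim_mem_max_chain[OF F V(1)]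
    have "W = flag_space F' (vec.dim V)"
      using V(2) h[rule_format, of "vec.dim V"] flag_space_dim[OF F V(1)] dim by simp
    then show "W \<in> F'"
      using at_dim_in_max_chain(1)[OF F' dim] dim by (simp add: flag_space_at_dim)
  qed
  show "F' \<subseteq> map_chain h F"
  proof
    fix W assume W: "W \<in> F'"
    let ?V = "flag_space F (vec.dim W)"
    note dim = dim_mem_max_chain[OF F' W]
    have "?V \<in> F"
      using at_dim_in_max_chain(1)[OF F dim] dim by (simp add: flag_space_at_dim)
    moreover have "h ` ?V = W"
      using h[rule_format, of "vec.dim W"] dim flag_space_dim[OF F' W] by simp
    ultimately show "W \<in> map_chain h F"
      unfolding map_chain_def by (metis image_eqI)
  qed
qed

lemma stabilizer_transitive:
  fixes F F' :: "('k::{field,finite} ^ 'n) set set"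
  assumes F: "F \<in> link_flags s" and F': "F' \<in> link_flags s"
  obtains h where "h \<in> stabilizer s" "map_chain h F = F'"
proof -
  have m: "F \<in> max_chains" "F' \<in> max_chains" "s \<subseteq> F" "s \<subseteq> F'"
    using F F' by (auto simp: link_flags_def)
  obtain h where h: "vec_linear h" "bij h" "\<forall>i\<le>CARD('n). h ` flag_space F i = flag_space F' i"
    using ex_linear_map_max_chains[OF m(1,2)] by blast
  have "h ` V = V" if "V \<in> s" for V
  proof -
    have "h ` V = h ` flag_space F (vec.dim V)"
      using flag_space_dim[OF m(1)] that m(3) by auto
    also have "\<dots> = flag_space F' (vec.dim V)"
    proof -
      have "vec.dim V \<le> CARD('n)"
        using dim_mem_max_chain(2)[OF m(1)] that m(3) by (meson less_imp_le subsetD)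
      then show ?thesis
        using h(3) by blast
    qed
    also have "\<dots> = V"
      using flag_space_dim[OF m(2)] that m(4) by auto
    finally show ?thesis .
  qed
  then have "h \<in> stabilizer s"
    using h(1,2) unfolding stabilizer_def by blast
  then show ?thesis
    using that map_chain_eq_if_flag_spaces[OF m(1,2) h(3)] by blast
qed

lemma card_stabilizer_fiber_le:
  fixes s :: "('k::{field,finite} ^ 'n) set set"
  assumes F1: "F1 \<in> link_flags s" and F2: "F2 \<in> link_flags s"
  shows "card {h \<in> stabilizer s. map_chain h F0 = F1} \<le> card {h \<in> stabilizer s. map_chain h F0 = F2}"
proof -
  obtain g where g: "g \<in> stabilizer s" "map_chain g F1 = F2"
    using stabilizer_transitive[OF F1 F2] by blast
  have "inj_on ((\<circ>) g) {h \<in> stabilizer s. map_chain h F0 = F1}"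
    using stabilizer_inj[OF g(1)] by (auto intro!: inj_onI simp: fun_eq_iff inj_def)
  moreover have "(\<circ>) g ` {h \<in> stabilizer s. map_chain h F0 = F1} \<subseteq> {h \<in> stabilizer s. map_chain h F0 = F2}"
    using g comp_in_stabilizer[OF g(1)] by (auto simp: map_chain_comp)
  ultimately show ?thesis
    using finite_stabilizer[of s] by (intro card_inj_on_le) auto
qed

text \<open>The orbit map h \<mapsto> h F0 of the transitive stabilizer action has fibers of equal size,
  so uniform h in the stabilizer gives a uniform flag of the link.\<close>
lemma sum_stabilizer_of_bool:
  fixes s :: "('k::{field,finite} ^ 'n) set set"
  assumes F0: "F0 \<in> link_flags s"
  shows "(\<Sum>h\<in>stabilizer s. of_bool (P (map_chain h F0)) :: real)
     = real (card (stabilizer s)) / real (card (link_flags s)) * real (card {F \<in> link_flags s. P F})"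
proof -
  let ?G = "stabilizer s" and ?L = "link_flags s"
  let ?fiber = "\<lambda>F. {h \<in> ?G. map_chain h F0 = F}"
  define c where "c = card (?fiber F0)"
  have card_fiber: "card (?fiber F) = c" if "F \<in> ?L" for F
    using card_stabilizer_fiber_le[OF that F0, of F0] card_stabilizer_fiber_le[OF F0 that, of F0] c_def
    by simp
  have group: "(\<Sum>h\<in>?G. g h) = (\<Sum>F\<in>?L. \<Sum>h\<in>?fiber F. g h)" for g :: "_ \<Rightarrow> real"
    using sum.group[OF finite_stabilizer[of s] finite_link_flags[of s], of "\<lambda>h. map_chain h F0" g]
      map_chain_link_flags[OF _ F0] by (simp add: image_subsetI)
  have "(\<Sum>h\<in>?G. of_bool (P (map_chain h F0)) :: real) = (\<Sum>F\<in>?L. real c * of_bool (P F))"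
    unfolding group by (intro sum.cong refl) (simp add: card_fiber)
  also have "\<dots> = real c * real (card {F \<in> ?L. P F})"
    using finite_link_flags[of s] by (simp add: sum_distrib_left[symmetric] Int_def)
  finally have count: "(\<Sum>h\<in>?G. of_bool (P (map_chain h F0)) :: real) = real c * real (card {F \<in> ?L. P F})" .
  have "real (card ?G) = (\<Sum>F\<in>?L. \<Sum>h\<in>?fiber F. 1)"
    using group[of "\<lambda>_. 1"] by simp
  also have "\<dots> = real (card ?L) * real c"
    by (simp add: card_fiber)
  finally have "real (card ?G) = real (card ?L) * real c" .
  moreover have "card ?L > 0"
    using F0 finite_link_flags card_gt_0_iff by blast
  ultimately show ?thesis
    using count by simp
qed

section \<open>Vertices of the link\<close>

type_synonym ('k, 'n, 'g) cochain = "('k ^ 'n) set \<Rightarrow> ('k ^ 'n) set \<Rightarrow> 'g"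

type_synonym ('k, 'n) triangle = "('k ^ 'n) set \<times> ('k ^ 'n) set \<times> ('k ^ 'n) set"

locale flags_link =
  fixes s :: "('k::{field,finite} ^ 'n) set set" and i0 i1 i2 :: nat
  assumes colours: "0 < i0" "i0 < i1" "i1 < i2" "i2 < CARD('n)"
    and s_chain: "is_chain s"
    and s_colours: "\<forall>V\<in>s. vec.dim V \<notin> {i0, i1, i2}"
    and cond1: "2 * i0 \<le> i1 \<or> (\<exists>V\<in>s. i0 < vec.dim V \<and> vec.dim V < i1)"
    and cond2: "2 * i1 - i0 \<le> i2
       \<or> (\<exists>V\<in>s. i0 < vec.dim V \<and> vec.dim V < i1 \<and> 2 * i1 - vec.dim V \<le> i2)
       \<or> (\<exists>W\<in>s. i1 < vec.dim W \<and> vec.dim W < i2)"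
begin

abbreviation I :: "nat set" where
  "I \<equiv> {i0, i1, i2}"

definition vertex :: "nat \<Rightarrow> ('k ^ 'n) set \<Rightarrow> bool" where
  "vertex k x \<longleftrightarrow> vec.subspace x \<and> vec.dim x = k \<and> chain_floor s k \<subseteq> x \<and> x \<subseteq> chain_ceiling s k"

lemma s_subspace_chain: "subspace_chain s"
  using subspace_chain_if_is_chain[OF s_chain] .

lemma vertex_iff:
  "k \<in> I \<Longrightarrow> vertex k x \<longleftrightarrow> vec.subspace x \<and> vec.dim x = k \<and> (\<forall>V\<in>s. V \<subseteq> x \<or> x \<subseteq> V)"
  unfolding vertex_def using comparable_iff_between_floor_ceiling[of x k s] s_colours by auto

lemma vertex_dim: "vertex k x \<Longrightarrow> vec.dim x = k"
  and vertex_subspace: "vertex k x \<Longrightarrow> vec.subspace x"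
  unfolding vertex_def by auto

lemma vertex_sub_vertex: "k \<in> I \<Longrightarrow> vertex k x \<Longrightarrow> sub_vertex x"
  unfolding vertex_def sub_vertex_def using colours by auto

lemma vertex_subset_vertex:
  "vertex i x \<Longrightarrow> vertex j y \<Longrightarrow> i < j \<Longrightarrow> x \<subseteq> y \<or> y \<subseteq> x \<Longrightarrow> x \<subseteq> y"
  using vec.subset_if_comparable_dim_less[of x y] vertex_dim by auto

lemma chain_floor_subset_vertex: "vertex i x \<Longrightarrow> k \<le> i \<Longrightarrow> chain_floor s k \<subseteq> x"
  using chain_floor_mono[of k i s] unfolding vertex_def by blast

lemma vertex_subset_chain_ceiling: "vertex i x \<Longrightarrow> i \<le> k \<Longrightarrow> x \<subseteq> chain_ceiling s k"
  unfolding vertex_def chain_ceiling_def by (blast dest: le_less_trans)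

lemma subset_vertex: "vertex k x \<Longrightarrow> V \<in> s \<Longrightarrow> vec.dim V < k \<Longrightarrow> V \<subseteq> x"
  using subset_chain_floor[of V s k] unfolding vertex_def by blast

lemma vertex_subset: "vertex k x \<Longrightarrow> V \<in> s \<Longrightarrow> k < vec.dim V \<Longrightarrow> x \<subseteq> V"
  using chain_ceiling_subset[of V s k] unfolding vertex_def by blast

lemma ex_vertex_between:
  assumes "vec.subspace X" "vec.subspace Y" "chain_floor s k \<subseteq> X" "X \<subseteq> Y" "Y \<subseteq> chain_ceiling s k"
    "vec.dim X \<le> k" "k \<le> vec.dim Y"
  obtains y where "vertex k y" "X \<subseteq> y" "y \<subseteq> Y"
proof -
  obtain y where "vec.subspace y" "X \<subseteq> y" "y \<subseteq> Y" "vec.dim y = k"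
    using vec.exists_subspace_between[OF assms(1,2,4,6,7)] .
  then show ?thesis
    using that assms(3,5) unfolding vertex_def by blast
qed

lemma ex_vertex:
  assumes "k \<in> I"
  obtains x where "vertex k x"
proof -
  have "0 < k" "k < CARD('n)"
    using assms colours by auto
  then show ?thesis
    using exists_subspace_between_floor_ceiling[OF s_subspace_chain] that unfolding vertex_def by blast
qed

lemma is_chain_with_vertices:
  assumes "\<forall>x\<in>T. \<exists>k\<in>I. vertex k x" "\<forall>x\<in>T. \<forall>y\<in>T. x \<subseteq> y \<or> y \<subseteq> x"
  shows "is_chain (s \<union> T)"
  unfolding is_chain_def
proof (intro conjI ballI)
  fix V assume "V \<in> s \<union> T"
  then show "sub_vertex V"
    using assms(1) s_chain vertex_sub_vertex unfolding is_chain_def by blast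
next
  fix U V assume "U \<in> s \<union> T" "V \<in> s \<union> T"
  then consider "U \<in> s" "V \<in> s" | "U \<in> s" "V \<in> T" | "U \<in> T" "V \<in> s" | "U \<in> T" "V \<in> T"
    by blast
  then show "U \<subseteq> V \<or> V \<subseteq> U"
  proof cases
    case 1
    then show ?thesis
      using s_chain unfolding is_chain_def by blast
  next
    case 2
    then obtain k where "k \<in> I" "vertex k V"
      using assms(1) by blast
    then show ?thesis
      using 2 vertex_iff by blast
  next
    case 3
    then obtain k where "k \<in> I" "vertex k U"
      using assms(1) by blast
    then show ?thesis
      using 3 vertex_iff by blast
  next
    case 4
    then show ?thesis
      using assms(2) by blast
  qed
qed

lemma link_edgeI:
  assumes "i \<in> I" "j \<in> I" "i < j" "vertex i x" "vertex j y" "x \<subseteq> y"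
  shows "link_edge s I x y" "link_edge s I y x"
proof -
  have "vec.dim x \<noteq> vec.dim y"
    using vertex_dim assms(3-5) by auto
  then have "x \<noteq> y"
    by auto
  moreover have "is_chain (s \<union> {x, y})"
    using assms by (intro is_chain_with_vertices) auto
  moreover have "\<forall>V\<in>{x, y}. vec.dim V \<in> I"
    using assms vertex_dim by auto
  ultimately show "link_edge s I x y" "link_edge s I y x"
    unfolding link_edge_def link_face_def by (auto simp: insert_commute)
qed

lemma link_triangleI:
  assumes "vertex i0 a" "vertex i1 b" "vertex i2 c" "a \<subseteq> b" "b \<subseteq> c"
  shows "link_triangle s I a b c"
proof -
  have "vec.dim a = i0" "vec.dim b = i1" "vec.dim c = i2"
    using vertex_dim assms(1-3) by auto
  then have "a \<noteq> b" "b \<noteq> c" "a \<noteq> c"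
    using colours by auto
  moreover have "is_chain (s \<union> {a, b, c})"
    using assms by (intro is_chain_with_vertices) auto
  moreover have "\<forall>V\<in>{a, b, c}. vec.dim V \<in> I"
    using assms vertex_dim by auto
  ultimately show ?thesis
    unfolding link_triangle_def link_face_def by auto
qed

lemma link_edgeE:
  assumes "link_edge s I u v"
  obtains i j where "i \<in> I" "j \<in> I" "i < j" "vertex i u" "vertex j v" "u \<subseteq> v"
    | i j where "i \<in> I" "j \<in> I" "i < j" "vertex i v" "vertex j u" "v \<subseteq> u"
proof -
  have ne: "u \<noteq> v" and I: "vec.dim u \<in> I" "vec.dim v \<in> I" and ch: "is_chain (s \<union> {u, v})"
    using assms unfolding link_edge_def link_face_def by auto
  then have u: "vertex (vec.dim u) u" and v: "vertex (vec.dim v) v" and cmp: "u \<subseteq> v \<or> v \<subseteq> u"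
    using vertex_iff unfolding is_chain_def sub_vertex_def by auto
  have "vec.dim u \<noteq> vec.dim v"
    using is_chain_eq_if_dim_eq[OF ch, of u v] ne by auto
  then consider "vec.dim u < vec.dim v" | "vec.dim v < vec.dim u"
    by linarith
  then show ?thesis
  proof cases
    case 1
    then show ?thesis
      using that(1)[OF I 1 u v] vertex_subset_vertex[OF u v 1 cmp] by blast
  next
    case 2
    then show ?thesis
      using that(2)[OF I(2,1) 2 v u] vertex_subset_vertex[OF v u 2] cmp by blast
  qed
qed

lemma link_triangle_edges:
  assumes "link_triangle s I u v w"
  shows "link_edge s I u v" "link_edge s I v w" "link_edge s I w u"
proof -
  have ne: "u \<noteq> v" "v \<noteq> w" "u \<noteq> w" and I: "\<forall>V\<in>{u, v, w}. vec.dim V \<in> I"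
    and ch: "is_chain (s \<union> {u, v, w})"
    using assms unfolding link_triangle_def link_face_def by auto
  have sub: "is_chain T" if "T \<subseteq> s \<union> {u, v, w}" for T
    using ch that unfolding is_chain_def by blast
  show "link_edge s I u v" "link_edge s I v w" "link_edge s I w u"
    unfolding link_edge_def link_face_def
    using ne I sub[of "s \<union> {u, v}"] sub[of "s \<union> {v, w}"] sub[of "s \<union> {w, u}"] by auto
qed

lemma vertices_of_link_flag:
  assumes F: "F \<in> link_flags s"
  shows "vertex i0 (at_dim F i0)" "vertex i1 (at_dim F i1)" "vertex i2 (at_dim F i2)"
    "at_dim F i0 \<subseteq> at_dim F i1" "at_dim F i1 \<subseteq> at_dim F i2"
proof -
  have m: "F \<in> max_chains" "s \<subseteq> F"
    using F by (auto simp: link_flags_def)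
  have ch: "is_chain F"
    using m by (simp add: max_chains_def)
  have mem: "at_dim F k \<in> F" "vec.dim (at_dim F k) = k" if "k \<in> I" for k
    using at_dim_in_max_chain[OF m(1)] that colours by auto
  have v: "vertex k (at_dim F k)" if k: "k \<in> I" for k
  proof -
    have "vec.subspace (at_dim F k)"
      using ch mem(1)[OF k] unfolding is_chain_def sub_vertex_def by blast
    moreover have "\<forall>V\<in>s. V \<subseteq> at_dim F k \<or> at_dim F k \<subseteq> V"
      using ch mem(1)[OF k] m(2) unfolding is_chain_def by blast
    ultimately show ?thesis
      using vertex_iff[OF k] mem(2)[OF k] by simp
  qed
  have sub: "at_dim F i \<subseteq> at_dim F j" if "i \<in> I" "j \<in> I" "i < j" for i j
  proof -
    have "at_dim F i \<subseteq> at_dim F j \<or> at_dim F j \<subseteq> at_dim F i"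
      using ch mem(1)[OF that(1)] mem(1)[OF that(2)] unfolding is_chain_def by blast
    then show ?thesis
      by (rule vertex_subset_vertex[OF v[OF that(1)] v[OF that(2)] that(3)])
  qed
  show "vertex i0 (at_dim F i0)" "vertex i1 (at_dim F i1)" "vertex i2 (at_dim F i2)"
    "at_dim F i0 \<subseteq> at_dim F i1" "at_dim F i1 \<subseteq> at_dim F i2"
    using colours by (simp_all add: v sub)
qed

lemma ex_link_flag:
  assumes "vertex i0 a" "vertex i1 b" "vertex i2 c" "a \<subseteq> b" "b \<subseteq> c"
  obtains F where "F \<in> link_flags s" "at_dim F i0 = a" "at_dim F i1 = b" "at_dim F i2 = c"
proof -
  have "is_chain (s \<union> {a, b, c})"
    using assms by (intro is_chain_with_vertices) auto
  then obtain F where F: "F \<in> max_chains" "s \<union> {a, b, c} \<subseteq> F"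
    by (rule ex_max_chain_superset)
  have ch: "is_chain F"
    using F(1) by (simp add: max_chains_def)
  have "a \<in> F" "b \<in> F" "c \<in> F"
    using F(2) by auto
  then have "at_dim F i0 = a" "at_dim F i1 = b" "at_dim F i2 = c"
    using at_dim_eq[OF ch] vertex_dim assms(1-3) by simp_all
  moreover have "F \<in> link_flags s"
    using F by (simp add: link_flags_def)
  ultimately show ?thesis
    using that by blast
qed

lemma vertex_image:
  assumes h: "h \<in> stabilizer s" and k: "k \<in> I" and x: "vertex k x"
  shows "vertex k (h ` x)"
proof -
  have "V \<subseteq> h ` x \<or> h ` x \<subseteq> V" if "V \<in> s" for V
  proof -
    have "V \<subseteq> x \<or> x \<subseteq> V"
      using x k that vertex_iff by blast
    then have "h ` V \<subseteq> h ` x \<or> h ` x \<subseteq> h ` V"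
      by (auto intro: image_mono)
    then show ?thesis
      using stabilizer_fix[OF h that] by simp
  qed
  then show ?thesis
    using vec.linear_subspace_image[OF stabilizer_linear[OF h] vertex_subspace[OF x]]
      dim_image_linear_inj[OF stabilizer_linear[OF h] stabilizer_inj[OF h]] vertex_dim[OF x] vertex_iff[OF k]
    by simp
qed

lemma ex_vertex_below:
  assumes k: "k \<in> I" and j: "j \<in> I" and "k < j" and x: "vertex j x"
  obtains y where "vertex k y" "y \<subseteq> x"
proof -
  have sub: "vec.subspace (x \<inter> chain_ceiling s k)"
    using vertex_subspace[OF x] subspace_chain_ceiling[OF s_subspace_chain] by (rule vec.subspace_inter)
  have "k \<le> vec.dim (x \<inter> chain_ceiling s k)"
  proof (cases rule: chain_ceiling_cases[OF s_subspace_chain, of k])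
    case 1
    then show ?thesis
      using vertex_dim[OF x] \<open>k < j\<close> by simp
  next
    case 2
    then have "vec.dim (chain_ceiling s k) \<noteq> j"
      using s_colours j by auto
    then have "chain_ceiling s k \<subseteq> x \<or> x \<subseteq> chain_ceiling s k"
      using subset_vertex[OF x 2(1)] vertex_subset[OF x 2(1)] by (meson linorder_neqE_nat)
    then show ?thesis
      using 2 vertex_dim[OF x] \<open>k < j\<close> by (auto simp: Int_absorb1 Int_absorb2)
  qed
  moreover have "vec.dim (chain_floor s k) \<le> k"
    using dim_chain_floor_less[OF s_subspace_chain, of k] colours k by auto
  moreover have "chain_floor s k \<subseteq> x \<inter> chain_ceiling s k"
    using chain_floor_subset_vertex[OF x] chain_floor_subset_ceiling[OF s_subspace_chain order_refl]
      \<open>k < j\<close> by auto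
  ultimately obtain y where "vertex k y" "y \<subseteq> x \<inter> chain_ceiling s k"
    using ex_vertex_between[OF subspace_chain_floor sub] by blast
  then show ?thesis
    using that by blast
qed

text \<open>This is where the hypotheses on the colours enter: cond1 bounds the dimension of the span of
  two i0-vertices and the part of s below i1 by i1; cond2 does the same for two i1-vertices through
  a common i0-vertex and the bound i2.\<close>

lemma dim_span_vertices0_le:
  assumes a: "vertex i0 a" and a': "vertex i0 a'"
  shows "vec.dim (vec.span (chain_floor s i1 \<union> (a \<union> a'))) \<le> i1"
proof (cases "\<exists>V\<in>s. i0 < vec.dim V \<and> vec.dim V < i1")
  case True
  then obtain V where V: "V \<in> s" "i0 < vec.dim V" "vec.dim V < i1"
    by blast
  have "a \<union> a' \<subseteq> chain_floor s i1"
    using vertex_subset[OF a V(1,2)] vertex_subset[OF a' V(1,2)] subset_chain_floor[OF V(1,3)] by auto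
  then have "vec.span (chain_floor s i1 \<union> (a \<union> a')) \<subseteq> chain_floor s i1"
    by (intro vec.span_minimal subspace_chain_floor) auto
  then have "vec.dim (vec.span (chain_floor s i1 \<union> (a \<union> a'))) \<le> vec.dim (chain_floor s i1)"
    by (rule vec.dim_subset)
  then show ?thesis
    using dim_chain_floor_less[OF s_subspace_chain, of i1] colours by simp
next
  case False
  then have "2 * i0 \<le> i1"
    using cond1 by blast
  have "chain_floor s i1 \<subseteq> a"
    unfolding chain_floor_def
  proof (intro vec.span_minimal vertex_subspace[OF a] Union_least)
    fix V assume V: "V \<in> {V \<in> s. vec.dim V < i1}"
    then have "vec.dim V < i0"
      using s_colours False by fastforce
    then show "V \<subseteq> a"
      using subset_vertex[OF a] V by blast
  qed
  then have "vec.span (chain_floor s i1 \<union> (a \<union> a')) \<subseteq> vec.span (a \<union> a')"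
    by (intro vec.span_minimal vec.subspace_span) (auto intro: vec.span_base)
  then have "vec.dim (vec.span (chain_floor s i1 \<union> (a \<union> a'))) \<le> vec.dim (vec.span (a \<union> a'))"
    by (rule vec.dim_subset)
  also have "\<dots> \<le> vec.dim a + vec.dim a'"
    using vec.dim_span_Un_add_dim_Int[OF vertex_subspace[OF a] vertex_subspace[OF a']] by linarith
  finally show ?thesis
    using vertex_dim[OF a] vertex_dim[OF a'] \<open>2 * i0 \<le> i1\<close> by simp
qed

lemma dim_span_vertices1_le:
  assumes a: "vertex i0 a" and b: "vertex i1 b" and b': "vertex i1 b'" and ab: "a \<subseteq> b" "a \<subseteq> b'"
  shows "vec.dim (vec.span (chain_floor s i2 \<union> (b \<union> b'))) \<le> i2"
proof (cases "\<exists>W\<in>s. i1 < vec.dim W \<and> vec.dim W < i2")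
  case True
  then obtain W where W: "W \<in> s" "i1 < vec.dim W" "vec.dim W < i2"
    by blast
  have "b \<union> b' \<subseteq> chain_floor s i2"
    using vertex_subset[OF b W(1,2)] vertex_subset[OF b' W(1,2)] subset_chain_floor[OF W(1,3)] by auto
  then have "vec.span (chain_floor s i2 \<union> (b \<union> b')) \<subseteq> chain_floor s i2"
    by (intro vec.span_minimal subspace_chain_floor) auto
  then have "vec.dim (vec.span (chain_floor s i2 \<union> (b \<union> b'))) \<le> vec.dim (chain_floor s i2)"
    by (rule vec.dim_subset)
  then show ?thesis
    using dim_chain_floor_less[OF s_subspace_chain, of i2] colours by simp
next
  case False
  have "chain_floor s i2 \<subseteq> b"
    unfolding chain_floor_def
  proof (intro vec.span_minimal vertex_subspace[OF b] Union_least)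
    fix V assume V: "V \<in> {V \<in> s. vec.dim V < i2}"
    then have "vec.dim V < i1"
      using s_colours False by fastforce
    then show "V \<subseteq> b"
      using subset_vertex[OF b] V by blast
  qed
  then have "vec.span (chain_floor s i2 \<union> (b \<union> b')) \<subseteq> vec.span (b \<union> b')"
    by (intro vec.span_minimal vec.subspace_span) (auto intro: vec.span_base)
  then have "vec.dim (vec.span (chain_floor s i2 \<union> (b \<union> b'))) \<le> vec.dim (vec.span (b \<union> b'))"
    by (rule vec.dim_subset)
  moreover have "vec.dim (vec.span (b \<union> b')) + vec.dim (b \<inter> b') = i1 + i1"
    using vec.dim_span_Un_add_dim_Int[OF vertex_subspace[OF b] vertex_subspace[OF b']]
      vertex_dim[OF b] vertex_dim[OF b'] by simp
  moreover obtain m where "m \<le> vec.dim (b \<inter> b')" "2 * i1 - m \<le> i2"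
  proof (cases "2 * i1 - i0 \<le> i2")
    case True
    have "vec.dim a \<le> vec.dim (b \<inter> b')"
      using ab by (intro vec.dim_subset) auto
    then show ?thesis
      using that True vertex_dim[OF a] by blast
  next
    case False
    then obtain V where V: "V \<in> s" "vec.dim V < i1" "2 * i1 - vec.dim V \<le> i2"
      using cond2 \<open>\<not> (\<exists>W\<in>s. i1 < vec.dim W \<and> vec.dim W < i2)\<close> by blast
    have "vec.dim V \<le> vec.dim (b \<inter> b')"
      using subset_vertex[OF b V(1,2)] subset_vertex[OF b' V(1,2)] by (intro vec.dim_subset) auto
    then show ?thesis
      using that V(3) by blast
  qed
  ultimately show ?thesis
    by linarith
qed

lemma ex_vertex1_above_pair:
  assumes a: "vertex i0 a" and a': "vertex i0 a'" and b: "vertex i1 b" and X: "vec.subspace X"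
    and sub: "a \<subseteq> X" "a' \<subseteq> X" "b \<subseteq> X"
  obtains b' where "vertex i1 b'" "a \<subseteq> b'" "a' \<subseteq> b'" "b' \<subseteq> X"
proof -
  let ?A = "vec.span (chain_floor s i1 \<union> (a \<union> a'))"
  let ?B = "X \<inter> chain_ceiling s i1"
  have sB: "vec.subspace ?B"
    using X subspace_chain_ceiling[OF s_subspace_chain] by (rule vec.subspace_inter)
  have AB: "?A \<subseteq> ?B"
  proof (rule vec.span_minimal[OF _ sB])
    show "chain_floor s i1 \<union> (a \<union> a') \<subseteq> ?B"
      using sub chain_floor_subset_vertex[OF b order_refl] vertex_subset_chain_ceiling[OF a, of i1]
        chain_floor_subset_ceiling[OF s_subspace_chain order_refl, of i1]
        vertex_subset_chain_ceiling[OF a', of i1] colours by auto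
  qed
  have dB: "i1 \<le> vec.dim ?B"
  proof -
    have "b \<subseteq> ?B"
      using sub vertex_subset_chain_ceiling[OF b order_refl] by auto
    then show ?thesis
      using vec.dim_subset[of b ?B] vertex_dim[OF b] by simp
  qed
  have dA: "vec.dim ?A \<le> i1"
    using dim_span_vertices0_le[OF a a'] .
  have "chain_floor s i1 \<subseteq> ?A"
    by (meson Un_subset_iff vec.span_superset)
  then obtain y where "vertex i1 y" "?A \<subseteq> y" "y \<subseteq> ?B"
    using ex_vertex_between[OF vec.subspace_span sB _ AB Int_lower2 dA dB] by blast
  moreover have "a \<union> a' \<subseteq> ?A"
    by (meson Un_subset_iff vec.span_superset)
  ultimately show ?thesis
    using that by blast
qed

lemma ex_vertex2_above_pair:
  assumes a: "vertex i0 a" and b: "vertex i1 b" and b': "vertex i1 b'" and ab: "a \<subseteq> b" "a \<subseteq> b'"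
  obtains c where "vertex i2 c" "b \<subseteq> c" "b' \<subseteq> c"
proof -
  let ?A = "vec.span (chain_floor s i2 \<union> (b \<union> b'))"
  let ?B = "chain_ceiling s i2"
  have sB: "vec.subspace ?B"
    using subspace_chain_ceiling[OF s_subspace_chain] .
  have AB: "?A \<subseteq> ?B"
  proof (rule vec.span_minimal[OF _ sB])
    show "chain_floor s i2 \<union> (b \<union> b') \<subseteq> ?B"
      using chain_floor_subset_ceiling[OF s_subspace_chain order_refl, of i2]
        vertex_subset_chain_ceiling[OF b, of i2] vertex_subset_chain_ceiling[OF b', of i2] colours
      by auto
  qed
  have dB: "i2 \<le> vec.dim ?B"
    using dim_chain_ceiling_greater[OF s_subspace_chain] colours by (simp add: less_imp_le)
  have dA: "vec.dim ?A \<le> i2"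
    using dim_span_vertices1_le[OF a b b' ab] .
  have "chain_floor s i2 \<subseteq> ?A"
    by (meson Un_subset_iff vec.span_superset)
  then obtain y where "vertex i2 y" "?A \<subseteq> y" "y \<subseteq> ?B"
    using ex_vertex_between[OF vec.subspace_span sB _ AB order_refl dA dB] by blast
  moreover have "b \<union> b' \<subseteq> ?A"
    by (meson Un_subset_iff vec.span_superset)
  ultimately show ?thesis
    using that by blast
qed

end

section \<open>Cones\<close>

lemma add3_eq_0_rotations:
  fixes x y z :: "'g::group_add"
  assumes "x + y + z = 0"
  shows "-z = x + y" "x = -z + -y" "y = -x + -z" "z = -y + -x" "-x = y + z" "-y = z + x"
proof -
  have xyz: "x + (y + z) = 0"
    using assms by (simp add: add.assoc)
  have "x + y = -z"
    using assms by (simp only: eq_neg_iff_add_eq_0)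
  then show "-z = x + y"
    by simp
  show neg_x: "-x = y + z"
    using xyz by (simp only: neg_eq_iff_add_eq_0)
  have "x = -(y + z)"
    using xyz by (simp only: eq_neg_iff_add_eq_0)
  then show "x = -z + -y"
    by (simp only: minus_add)
  have "-(x + y) = z"
    using assms by (simp only: neg_eq_iff_add_eq_0)
  then show "z = -y + -x"
    by (simp only: minus_add)
  show "y = -x + -z"
    unfolding neg_x by (simp add: add.assoc)
  have "y + z + x = 0"
    using neg_x by (metis add.left_inverse)
  then have "y + (z + x) = 0"
    by (simp add: add.assoc)
  then show "-y = z + x"
    by (simp only: neg_eq_iff_add_eq_0)
qed

context flags_link
begin

definition flag_triangle :: "('k, 'n) triangle \<Rightarrow> bool" where
  "flag_triangle = (\<lambda>(a, b, c). vertex i0 a \<and> vertex i1 b \<and> vertex i2 c \<and> a \<subseteq> b \<and> b \<subseteq> c)"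

definition closed_at :: "('k, 'n, 'g::group_add) cochain
    \<Rightarrow> ('k, 'n) triangle \<Rightarrow> bool" where
  "closed_at f = (\<lambda>(a, b, c). cob1 f a b c = 0)"

lemma cochain_antisym:
  assumes "f \<in> cochains1 s I" "i \<in> I" "j \<in> I" "i < j" "vertex i x" "vertex j y" "x \<subseteq> y"
  shows "f y x = - f x y"
  using assms(1) link_edgeI(2)[OF assms(2-7)] unfolding cochains1_def by blast

lemma closed_triangle_relations:
  fixes f :: "('k, 'n, 'g::group_add) cochain"
  assumes f: "f \<in> cochains1 s I" and t: "flag_triangle (a, b, c)" and closed: "closed_at f (a, b, c)"
  shows "f a c = f a b + f b c" "f a b = f a c + f c b" "f b c = f b a + f a c"
    "f c a = f c b + f b a" "f b a = f b c + f c a" "f c b = f c a + f a b"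
proof -
  have abc: "vertex i0 a" "vertex i1 b" "vertex i2 c" "a \<subseteq> b" "b \<subseteq> c"
    using t unfolding flag_triangle_def by auto
  have ba: "f b a = - f a b"
    using cochain_antisym[OF f _ _ _ abc(1,2,4)] colours by simp
  have cb: "f c b = - f b c"
    using cochain_antisym[OF f _ _ _ abc(2,3,5)] colours by simp
  have "a \<subseteq> c"
    using abc(4,5) by blast
  then have "f c a = - f a c"
    using cochain_antisym[OF f _ _ _ abc(1,3)] colours by simp
  then have ca: "f a c = - f c a"
    by simp
  have "f a b + f b c + f c a = 0"
    using closed unfolding closed_at_def cob1_def by simp
  note rot = add3_eq_0_rotations[OF this]
  show "f a c = f a b + f b c"
    using rot(1) ca by simp
  show "f a b = f a c + f c b"
    using rot(2) ca cb by simp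
  show "f b c = f b a + f a c"
    using rot(3) ba ca by simp
  show "f c a = f c b + f b a"
    using rot(4) ba cb by simp
  show "f b a = f b c + f c a"
    using rot(5) ba by simp
  show "f c b = f c a + f a b"
    using rot(6) cb by simp
qed

text \<open>The cone potential: cone f x is the sum of f along a fixed path from the apex to x.\<close>

definition apex :: "('k ^ 'n) set" where
  "apex = (SOME a. vertex i0 a)"

definition join1 :: "('k ^ 'n) set \<Rightarrow> ('k ^ 'n) set" where
  "join1 a = (SOME b. vertex i1 b \<and> apex \<subseteq> b \<and> a \<subseteq> b)"

definition foot1 :: "('k ^ 'n) set \<Rightarrow> ('k ^ 'n) set" where
  "foot1 b = (SOME a. vertex i0 a \<and> a \<subseteq> b)"

definition join2 :: "('k ^ 'n) set \<Rightarrow> ('k ^ 'n) set" where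
  "join2 b = (SOME c. vertex i2 c \<and> b \<subseteq> c \<and> join1 (foot1 b) \<subseteq> c)"

definition foot2 :: "('k ^ 'n) set \<Rightarrow> ('k ^ 'n) set" where
  "foot2 c = (SOME a. vertex i0 a \<and> a \<subseteq> c)"

definition cone :: "('k, 'n, 'g::group_add) cochain \<Rightarrow> ('k ^ 'n) set \<Rightarrow> 'g" where
  "cone f x = (if vec.dim x = i0 then f apex (join1 x) + f (join1 x) x
     else if vec.dim x = i1 then f apex (join2 x) + f (join2 x) x
     else f apex (join1 (foot2 x)) + f (join1 (foot2 x)) (foot2 x) + f (foot2 x) x)"

lemma apex_vertex: "vertex i0 apex"
proof -
  obtain a where "vertex i0 a"
    using ex_vertex[of i0] by blast
  then show ?thesis
    unfolding apex_def by (rule someI)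
qed

lemma join1_spec:
  assumes "vertex i0 a"
  shows "vertex i1 (join1 a)" "apex \<subseteq> join1 a" "a \<subseteq> join1 a"
proof -
  obtain b where b: "vertex i1 b"
    using ex_vertex[of i1] by blast
  obtain b' where "vertex i1 b'" "apex \<subseteq> b'" "a \<subseteq> b'" "b' \<subseteq> UNIV"
    by (rule ex_vertex1_above_pair[OF apex_vertex assms b vec.subspace_UNIV subset_UNIV subset_UNIV subset_UNIV])
  then have "vertex i1 b' \<and> apex \<subseteq> b' \<and> a \<subseteq> b'"
    by blast
  then have "vertex i1 (join1 a) \<and> apex \<subseteq> join1 a \<and> a \<subseteq> join1 a"
    unfolding join1_def by (rule someI)
  then show "vertex i1 (join1 a)" "apex \<subseteq> join1 a" "a \<subseteq> join1 a"
    by simp_all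
qed

lemma foot1_spec:
  assumes "vertex i1 b"
  shows "vertex i0 (foot1 b)" "foot1 b \<subseteq> b"
proof -
  have I: "i0 \<in> I" "i1 \<in> I" "i0 < i1"
    using colours by auto
  obtain a where "vertex i0 a" "a \<subseteq> b"
    by (rule ex_vertex_below[OF I assms])
  then have "vertex i0 a \<and> a \<subseteq> b"
    by blast
  then have "vertex i0 (foot1 b) \<and> foot1 b \<subseteq> b"
    unfolding foot1_def by (rule someI)
  then show "vertex i0 (foot1 b)" "foot1 b \<subseteq> b"
    by simp_all
qed

lemma foot2_spec:
  assumes "vertex i2 c"
  shows "vertex i0 (foot2 c)" "foot2 c \<subseteq> c"
proof -
  have I: "i0 \<in> I" "i2 \<in> I" "i0 < i2"
    using colours by auto
  obtain a where "vertex i0 a" "a \<subseteq> c"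
    by (rule ex_vertex_below[OF I assms])
  then have "vertex i0 a \<and> a \<subseteq> c"
    by blast
  then have "vertex i0 (foot2 c) \<and> foot2 c \<subseteq> c"
    unfolding foot2_def by (rule someI)
  then show "vertex i0 (foot2 c)" "foot2 c \<subseteq> c"
    by simp_all
qed

lemma join2_spec:
  assumes b: "vertex i1 b"
  shows "vertex i2 (join2 b)" "b \<subseteq> join2 b" "apex \<subseteq> join2 b"
proof -
  note a = foot1_spec[OF b]
  note b' = join1_spec[OF a(1)]
  obtain c where "vertex i2 c" "b \<subseteq> c" "join1 (foot1 b) \<subseteq> c"
    by (rule ex_vertex2_above_pair[OF a(1) b b'(1) a(2) b'(3)])
  then have "vertex i2 c \<and> b \<subseteq> c \<and> join1 (foot1 b) \<subseteq> c"
    by blast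
  then have "vertex i2 (join2 b) \<and> b \<subseteq> join2 b \<and> join1 (foot1 b) \<subseteq> join2 b"
    unfolding join2_def by (rule someI)
  then show "vertex i2 (join2 b)" "b \<subseteq> join2 b" "apex \<subseteq> join2 b"
    using b'(2) by auto
qed

lemma cone_vertex0: "vertex i0 a \<Longrightarrow> cone f a = f apex (join1 a) + f (join1 a) a"
  unfolding cone_def using vertex_dim by auto

lemma cone_vertex1: "vertex i1 b \<Longrightarrow> cone f b = f apex (join2 b) + f (join2 b) b"
  unfolding cone_def using vertex_dim colours by auto

lemma cone_vertex2:
  assumes "vertex i2 c"
  shows "cone f c = cone f (foot2 c) + f (foot2 c) c"
proof -
  have "cone f (foot2 c) = f apex (join1 (foot2 c)) + f (join1 (foot2 c)) (foot2 c)"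
    using cone_vertex0[OF foot2_spec(1)[OF assms]] .
  then show ?thesis
    unfolding cone_def[of f c] using vertex_dim[OF assms] colours by auto
qed

definition forced_by_triangles ::
    "nat \<Rightarrow> (('k, 'n, 'g::group_add) cochain \<Rightarrow> bool) \<Rightarrow> bool" where
  "forced_by_triangles R P \<longleftrightarrow> (\<exists>ts. length ts \<le> R \<and> (\<forall>t\<in>set ts. flag_triangle t)
     \<and> (\<forall>f\<in>cochains1 s I. (\<forall>t\<in>set ts. closed_at f t) \<longrightarrow> P f))"

lemma forced_by_trianglesI:
  assumes "length ts \<le> R" "\<forall>t\<in>set ts. flag_triangle t"
    "\<And>f. f \<in> cochains1 s I \<Longrightarrow> \<forall>t\<in>set ts. closed_at f t \<Longrightarrow> P f"
  shows "forced_by_triangles R P"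
  unfolding forced_by_triangles_def using assms by blast

lemma forced_by_trianglesE:
  assumes "forced_by_triangles R P"
  obtains ts where "length ts \<le> R" "\<forall>t\<in>set ts. flag_triangle t"
    "\<forall>f\<in>cochains1 s I. (\<forall>t\<in>set ts. closed_at f t) \<longrightarrow> P f"
  using assms unfolding forced_by_triangles_def by blast

lemma cone_path_010:
  assumes a: "vertex i0 a" and a': "vertex i0 a'" and b: "vertex i1 b" and ab: "a \<subseteq> b" "a' \<subseteq> b"
  shows "forced_by_triangles 10 (\<lambda>f :: ('k, 'n, 'g::group_add) cochain. cone f a + f a b + f b a' = cone f a')"
proof -
  define p p' where "p = join1 a" and "p' = join1 a'"
  note p = join1_spec[OF a, folded p_def] and p' = join1_spec[OF a', folded p'_def]
  obtain c1 where c1: "vertex i2 c1" "p \<subseteq> c1" "b \<subseteq> c1"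
    by (rule ex_vertex2_above_pair[OF a p(1) b p(3) ab(1)])
  obtain c2 where c2: "vertex i2 c2" "b \<subseteq> c2" "p' \<subseteq> c2"
    by (rule ex_vertex2_above_pair[OF a' b p'(1) ab(2) p'(3)])
  have "vec.subspace (c1 \<inter> c2)"
    using vertex_subspace[OF c1(1)] vertex_subspace[OF c2(1)] by (rule vec.subspace_inter)
  moreover have "apex \<subseteq> c1 \<inter> c2" "a \<subseteq> c1 \<inter> c2" "b \<subseteq> c1 \<inter> c2"
    using p(2) c1(2) p'(2) c2(3) ab(1) c1(3) c2(2) by blast+
  ultimately obtain q where q: "vertex i1 q" "apex \<subseteq> q" "a \<subseteq> q" "q \<subseteq> c1 \<inter> c2"
    by (rule ex_vertex1_above_pair[OF apex_vertex a b])
  let ?ts = "[(apex, p, c1), (a, p, c1), (apex, q, c1), (a, q, c1), (a, b, c2), (a', b, c2),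
    (a, q, c2), (apex, q, c2), (a', p', c2), (apex, p', c2)]"
  show ?thesis
  proof (rule forced_by_trianglesI[of ?ts])
    show tri: "\<forall>t\<in>set ?ts. flag_triangle t"
      unfolding flag_triangle_def using a a' b p p' c1 c2 q ab apex_vertex by auto
    fix f :: "('k, 'n, 'g::group_add) cochain"
    assume f: "f \<in> cochains1 s I" and closed: "\<forall>t\<in>set ?ts. closed_at f t"
    note rel = closed_triangle_relations[OF f]
    have r1: "f apex p = f apex c1 + f c1 p" using rel(2) tri closed by simp
    have r2: "f c1 a = f c1 p + f p a" using rel(4) tri closed by simp
    have r3: "f apex c1 = f apex q + f q c1" using rel(1) tri closed by simp
    have r4: "f q a = f q c1 + f c1 a" using rel(5) tri closed by simp
    have r5: "f a b = f a c2 + f c2 b" using rel(2) tri closed by simp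
    have r6: "f c2 a' = f c2 b + f b a'" using rel(4) tri closed by simp
    have r7: "f q c2 = f q a + f a c2" using rel(3) tri closed by simp
    have r8: "f apex c2 = f apex q + f q c2" using rel(1) tri closed by simp
    have r9: "f c2 a' = f c2 p' + f p' a'" using rel(4) tri closed by simp
    have r10: "f apex p' = f apex c2 + f c2 p'" using rel(2) tri closed by simp
    have "cone f a + f a b + f b a' = f apex p + f p a + f a b + f b a'"
      using cone_vertex0[OF a, of f] p_def by simp
    also have "\<dots> = f apex c1 + f c1 p + f p a + f a b + f b a'" by (simp add: r1 add.assoc)
    also have "\<dots> = f apex c1 + f c1 a + f a b + f b a'" by (simp add: r2 add.assoc)
    also have "\<dots> = f apex q + f q c1 + f c1 a + f a b + f b a'" by (simp add: r3 add.assoc)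
    also have "\<dots> = f apex q + f q a + f a b + f b a'" by (simp add: r4 add.assoc)
    also have "\<dots> = f apex q + f q a + f a c2 + f c2 b + f b a'" by (simp add: r5 add.assoc)
    also have "\<dots> = f apex q + f q a + f a c2 + f c2 a'" by (simp add: r6 add.assoc)
    also have "\<dots> = f apex q + f q c2 + f c2 a'" by (simp add: r7 add.assoc)
    also have "\<dots> = f apex c2 + f c2 a'" by (simp add: r8 add.assoc)
    also have "\<dots> = f apex c2 + f c2 p' + f p' a'" by (simp add: r9 add.assoc)
    also have "\<dots> = f apex p' + f p' a'" by (simp add: r10 add.assoc)
    also have "\<dots> = cone f a'"
      using cone_vertex0[OF a', of f] p'_def by simp
    finally show "cone f a + f a b + f b a' = cone f a'" .
  qed simp
qed

lemma cone_edge01: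
  assumes a: "vertex i0 a" and b: "vertex i1 b" and ab: "a \<subseteq> b"
  shows "forced_by_triangles 7 (\<lambda>f :: ('k, 'n, 'g::group_add) cochain. cone f a + f a b = cone f b)"
proof -
  define p c where "p = join1 a" and "c = join2 b"
  note p = join1_spec[OF a, folded p_def] and c = join2_spec[OF b, folded c_def]
  obtain c' where c': "vertex i2 c'" "p \<subseteq> c'" "b \<subseteq> c'"
    by (rule ex_vertex2_above_pair[OF a p(1) b p(3) ab])
  have "vec.subspace (c' \<inter> c)"
    using vertex_subspace[OF c'(1)] vertex_subspace[OF c(1)] by (rule vec.subspace_inter)
  moreover have "apex \<subseteq> c' \<inter> c" "a \<subseteq> c' \<inter> c" "b \<subseteq> c' \<inter> c"
    using p(2) c'(2) c(3) ab c'(3) c(2) by blast+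
  ultimately obtain q where q: "vertex i1 q" "apex \<subseteq> q" "a \<subseteq> q" "q \<subseteq> c' \<inter> c"
    by (rule ex_vertex1_above_pair[OF apex_vertex a b])
  let ?ts = "[(a, b, c), (apex, p, c'), (a, p, c'), (apex, q, c'), (a, q, c'), (a, q, c), (apex, q, c)]"
  show ?thesis
  proof (rule forced_by_trianglesI[of ?ts])
    show tri: "\<forall>t\<in>set ?ts. flag_triangle t"
      unfolding flag_triangle_def using a b p c c' q ab apex_vertex by auto
    fix f :: "('k, 'n, 'g::group_add) cochain"
    assume f: "f \<in> cochains1 s I" and closed: "\<forall>t\<in>set ?ts. closed_at f t"
    note rel = closed_triangle_relations[OF f]
    have r1: "f a b = f a c + f c b" using rel(2) tri closed by simp
    have r2: "f apex p = f apex c' + f c' p" using rel(2) tri closed by simp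
    have r3: "f c' a = f c' p + f p a" using rel(4) tri closed by simp
    have r4: "f apex c' = f apex q + f q c'" using rel(1) tri closed by simp
    have r5: "f q a = f q c' + f c' a" using rel(5) tri closed by simp
    have r6: "f q c = f q a + f a c" using rel(3) tri closed by simp
    have r7: "f apex c = f apex q + f q c" using rel(1) tri closed by simp
    have "cone f a + f a b = f apex p + f p a + f a b"
      using cone_vertex0[OF a, of f] p_def by simp
    also have "\<dots> = f apex c' + f c' p + f p a + f a b" by (simp add: r2 add.assoc)
    also have "\<dots> = f apex c' + f c' a + f a b" by (simp add: r3 add.assoc)
    also have "\<dots> = f apex q + f q c' + f c' a + f a b" by (simp add: r4 add.assoc)
    also have "\<dots> = f apex q + f q a + f a b" by (simp add: r5 add.assoc)
    also have "\<dots> = f apex q + f q a + f a c + f c b" by (simp add: r1 add.assoc)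
    also have "\<dots> = f apex q + f q c + f c b" by (simp add: r6 add.assoc)
    also have "\<dots> = f apex c + f c b" by (simp add: r7 add.assoc)
    also have "\<dots> = cone f b"
      using cone_vertex1[OF b, of f] c_def by simp
    finally show "cone f a + f a b = cone f b" .
  qed simp
qed

lemma cone_edge02:
  assumes a: "vertex i0 a" and c: "vertex i2 c" and ac: "a \<subseteq> c"
  shows "forced_by_triangles 12 (\<lambda>f :: ('k, 'n, 'g::group_add) cochain. cone f a + f a c = cone f c)"
proof -
  define e where "e = foot2 c"
  note e = foot2_spec[OF c, folded e_def]
  have I: "i1 \<in> I" "i2 \<in> I" "i1 < i2"
    using colours by auto
  obtain b where b: "vertex i1 b" "b \<subseteq> c"
    by (rule ex_vertex_below[OF I c])
  obtain q where q: "vertex i1 q" "a \<subseteq> q" "e \<subseteq> q" "q \<subseteq> c"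
    by (rule ex_vertex1_above_pair[OF a e(1) b(1) vertex_subspace[OF c] ac e(2) b(2)])
  obtain ts where ts: "length ts \<le> 10" "\<forall>t\<in>set ts. flag_triangle t"
    "\<forall>f\<in>cochains1 s I. (\<forall>t\<in>set ts. closed_at f t) \<longrightarrow> cone f a + f a q + f q e = (cone f e :: 'g)"
    using cone_path_010[OF a e(1) q(1,2,3)] by (rule forced_by_trianglesE)
  let ?ts = "[(a, q, c), (e, q, c)] @ ts"
  show ?thesis
  proof (rule forced_by_trianglesI[of ?ts])
    show tri: "\<forall>t\<in>set ?ts. flag_triangle t"
      unfolding flag_triangle_def using a q c e ts(2) unfolding flag_triangle_def by auto
    show "length ?ts \<le> 12"
      using ts(1) by simp
    fix f :: "('k, 'n, 'g::group_add) cochain"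
    assume f: "f \<in> cochains1 s I" and closed: "\<forall>t\<in>set ?ts. closed_at f t"
    have r1: "f a c = f a q + f q c"
      using closed_triangle_relations(1)[OF f] tri closed by simp
    have r2: "f e c = f e q + f q c"
      using closed_triangle_relations(1)[OF f] tri closed by simp
    have path: "cone f a + f a q + f q e = cone f e"
      using ts(3) f closed by simp
    have anti: "f q e = - f e q"
      using cochain_antisym[OF f _ _ _ e(1) q(1) q(3)] colours by simp
    have "cone f c = cone f e + f e c"
      using cone_vertex2[OF c, of f] e_def by simp
    also have "\<dots> = cone f a + f a q + f q e + f e c"
      using path by simp
    also have "\<dots> = cone f a + f a q + f q e + f e q + f q c" by (simp add: r2 add.assoc)
    also have "\<dots> = cone f a + f a q + f q c" by (simp add: anti add.assoc)
    also have "\<dots> = cone f a + f a c" by (simp add: r1 add.assoc)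
    finally show "cone f a + f a c = cone f c"
      by simp
  qed
qed

lemma cone_edge12:
  assumes b: "vertex i1 b" and c: "vertex i2 c" and bc: "b \<subseteq> c"
  shows "forced_by_triangles 20 (\<lambda>f :: ('k, 'n, 'g::group_add) cochain. cone f b + f b c = cone f c)"
proof -
  define a where "a = foot1 b"
  note a = foot1_spec[OF b, folded a_def]
  obtain ts1 where ts1: "length ts1 \<le> 7" "\<forall>t\<in>set ts1. flag_triangle t"
    "\<forall>f\<in>cochains1 s I. (\<forall>t\<in>set ts1. closed_at f t) \<longrightarrow> cone f a + f a b = (cone f b :: 'g)"
    using cone_edge01[OF a(1) b a(2)] by (rule forced_by_trianglesE)
  have "a \<subseteq> c"
    using a(2) bc by blast
  obtain ts2 where ts2: "length ts2 \<le> 12" "\<forall>t\<in>set ts2. flag_triangle t"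
    "\<forall>f\<in>cochains1 s I. (\<forall>t\<in>set ts2. closed_at f t) \<longrightarrow> cone f a + f a c = (cone f c :: 'g)"
    using cone_edge02[OF a(1) c \<open>a \<subseteq> c\<close>] by (rule forced_by_trianglesE)
  let ?ts = "[(a, b, c)] @ ts1 @ ts2"
  show ?thesis
  proof (rule forced_by_trianglesI[of ?ts])
    show tri: "\<forall>t\<in>set ?ts. flag_triangle t"
      using a b c bc ts1(2) ts2(2) unfolding flag_triangle_def by auto
    show "length ?ts \<le> 20"
      using ts1(1) ts2(1) by simp
    fix f :: "('k, 'n, 'g::group_add) cochain"
    assume f: "f \<in> cochains1 s I" and closed: "\<forall>t\<in>set ?ts. closed_at f t"
    have "cone f b + f b c = cone f a + f a b + f b c"
      using ts1(3) f closed by simp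
    also have "\<dots> = cone f a + f a c"
    proof -
      have "f a c = f a b + f b c"
        using closed_triangle_relations(1)[OF f] tri closed by simp
      then show ?thesis
        by (simp add: add.assoc)
    qed
    also have "\<dots> = cone f c"
      using ts2(3) f closed by simp
    finally show "cone f b + f b c = cone f c" .
  qed
qed

end

section \<open>Averaging over the stabilizer\<close>

lemma of_bool_le_sum_of_bool_nth:
  assumes "\<exists>t\<in>set ts. P t"
  shows "of_bool Q \<le> (\<Sum>k<length ts. of_bool (P (ts ! k)) :: real)"
proof -
  obtain k where k: "k < length ts" "P (ts ! k)"
    using assms by (auto simp: in_set_conv_nth)
  then have "of_bool Q \<le> (of_bool (P (ts ! k)) :: real)"
    by simp
  also have "\<dots> \<le> (\<Sum>k<length ts. of_bool (P (ts ! k)))"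
    using k by (intro member_le_sum) auto
  finally show ?thesis .
qed

context flags_link
begin

definition pullback :: "('k ^ 'n \<Rightarrow> 'k ^ 'n) \<Rightarrow> ('k, 'n, 'g) cochain \<Rightarrow> ('k, 'n, 'g) cochain" where
  "pullback h f u v = f (h ` u) (h ` v)"

definition cone_coboundary ::
    "('k ^ 'n \<Rightarrow> 'k ^ 'n) \<Rightarrow> ('k, 'n, 'g::group_add) cochain \<Rightarrow> ('k, 'n, 'g) cochain" where
  "cone_coboundary h f u v = - cone (pullback h f) (h -` u) - - cone (pullback h f) (h -` v)"

definition cob_fails :: "('k, 'n, 'g::group_add) cochain \<Rightarrow> ('k ^ 'n) set set \<Rightarrow> bool" where
  "cob_fails f F \<longleftrightarrow> cob1 f (at_dim F i0) (at_dim F i1) (at_dim F i2) \<noteq> 0"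

lemma pullback_cochain:
  assumes h: "h \<in> stabilizer s" and f: "f \<in> cochains1 s I"
  shows "pullback h f \<in> cochains1 s I"
  unfolding cochains1_def
proof (intro CollectI allI impI)
  fix u v assume "link_edge s I u v"
  then have "link_edge s I (h ` u) (h ` v)"
  proof (cases rule: link_edgeE)
    case (1 i j)
    then show ?thesis
      using link_edgeI(1)[OF 1(1-3) vertex_image[OF h 1(1,4)] vertex_image[OF h 1(2,5)]] by auto
  next
    case (2 i j)
    then show ?thesis
      using link_edgeI(2)[OF 2(1-3) vertex_image[OF h 2(1,4)] vertex_image[OF h 2(2,5)]] by auto
  qed
  then show "pullback h f u v = - pullback h f v u"
    using f unfolding cochains1_def pullback_def by blast
qed

lemma cone_coboundary_cocycle: "cone_coboundary h f \<in> cocycles1 s I"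
  unfolding cocycles1_def cochains1_def cob1_def cone_coboundary_def
  by (simp add: diff_conv_add_uminus add.assoc minus_add)

lemma closed_at_pullback: "closed_at (pullback h f) (x, y, z) \<longleftrightarrow> cob1 f (h ` x) (h ` y) (h ` z) = 0"
  unfolding closed_at_def pullback_def cob1_def by simp

lemma at_dim_map_chain_link_flag:
  assumes "h \<in> stabilizer s" "F \<in> link_flags s" "k \<in> I"
  shows "at_dim (map_chain h F) k = h ` at_dim F k"
  using at_dim_map_chain[OF stabilizer_linear[OF assms(1)] stabilizer_inj[OF assms(1)]] assms colours
  by (auto simp: link_flags_def)

text \<open>The triangle is the I-part of a link flag F, and map_chain h F is a uniformly distributed
  link flag when h is uniform in the stabilizer.\<close>
lemma sum_stabilizer_not_closed:
  fixes f :: "('k, 'n, 'g::group_add) cochain"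
  assumes t: "flag_triangle t"
  shows "(\<Sum>h\<in>stabilizer s. of_bool (\<not> closed_at (pullback h f) t) :: real)
     = real (card (stabilizer s)) / real (card (link_flags s)) * real (card {F \<in> link_flags s. cob_fails f F})"
proof -
  obtain x y z where xyz: "t = (x, y, z)"
    by (cases t) auto
  then have "vertex i0 x" "vertex i1 y" "vertex i2 z" "x \<subseteq> y" "y \<subseteq> z"
    using t unfolding flag_triangle_def by auto
  then obtain F where F: "F \<in> link_flags s" "at_dim F i0 = x" "at_dim F i1 = y" "at_dim F i2 = z"
    by (rule ex_link_flag)
  have "\<not> closed_at (pullback h f) t \<longleftrightarrow> cob_fails f (map_chain h F)" if "h \<in> stabilizer s" for h
    using at_dim_map_chain_link_flag[OF that F(1)] F unfolding xyz closed_at_pullback cob_fails_def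
    by simp
  then have "(\<Sum>h\<in>stabilizer s. of_bool (\<not> closed_at (pullback h f) t) :: real)
      = (\<Sum>h\<in>stabilizer s. of_bool (cob_fails f (map_chain h F)))"
    by (intro sum.cong) auto
  also have "\<dots> = real (card (stabilizer s)) / real (card (link_flags s)) * real (card {F \<in> link_flags s. cob_fails f F})"
    by (rule sum_stabilizer_of_bool[OF F(1)])
  finally show ?thesis .
qed

lemma edge_disagreement_le_failed_triangles:
  fixes f :: "('k, 'n, 'g::group_add) cochain"
  assumes f: "f \<in> cochains1 s I" and h: "h \<in> stabilizer s" and F: "F \<in> link_flags s"
    and ij: "i \<in> I" "j \<in> I"
    and ts: "\<forall>f'\<in>cochains1 s I. (\<forall>t\<in>set ts. closed_at f' t) \<longrightarrow>
      cone f' (at_dim F i) + f' (at_dim F i) (at_dim F j) = (cone f' (at_dim F j) :: 'g)"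
  shows "of_bool (f (at_dim (map_chain h F) i) (at_dim (map_chain h F) j)
      \<noteq> cone_coboundary h f (at_dim (map_chain h F) i) (at_dim (map_chain h F) j))
    \<le> (\<Sum>k<length ts. of_bool (\<not> closed_at (pullback h f) (ts ! k)) :: real)"
proof (cases "\<exists>t\<in>set ts. \<not> closed_at (pullback h f) t")
  case True
  then show ?thesis
    by (rule of_bool_le_sum_of_bool_nth)
next
  case False
  let ?x = "at_dim F i" and ?y = "at_dim F j" and ?g = "pullback h f"
  have "cone ?g ?x + ?g ?x ?y = cone ?g ?y"
    using ts pullback_cochain[OF h f] False by blast
  then have "- cone ?g ?x + (cone ?g ?x + ?g ?x ?y) = - cone ?g ?x + cone ?g ?y"
    by simp
  then have "?g ?x ?y = - cone ?g ?x + cone ?g ?y"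
    by (simp add: add.assoc[symmetric])
  moreover have "h -` (h ` A) = A" for A
    using stabilizer_inj[OF h] by (simp add: inj_vimage_image_eq)
  ultimately have "f (h ` ?x) (h ` ?y) = cone_coboundary h f (h ` ?x) (h ` ?y)"
    unfolding cone_coboundary_def pullback_def by (simp add: diff_conv_add_uminus)
  then show ?thesis
    using at_dim_map_chain_link_flag[OF h F] ij by (simp add: sum_nonneg)
qed

lemma card_edge_disagreements_le:
  fixes f :: "('k, 'n, 'g::group_add) cochain"
  assumes f: "f \<in> cochains1 s I" and h: "h \<in> stabilizer s" and ij: "i \<in> I" "j \<in> I"
    and TS: "\<forall>F\<in>link_flags s. \<forall>f'\<in>cochains1 s I. (\<forall>t\<in>set (TS F). closed_at f' t) \<longrightarrow>
      cone f' (at_dim F i) + f' (at_dim F i) (at_dim F j) = (cone f' (at_dim F j) :: 'g)"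
  shows "real (card {F \<in> link_flags s. f (at_dim F i) (at_dim F j) \<noteq> cone_coboundary h f (at_dim F i) (at_dim F j)})
    \<le> (\<Sum>F\<in>link_flags s. \<Sum>k<length (TS F). of_bool (\<not> closed_at (pullback h f) (TS F ! k)))"
proof -
  let ?disagree = "\<lambda>F. f (at_dim F i) (at_dim F j) \<noteq> cone_coboundary h f (at_dim F i) (at_dim F j)"
  have "real (card {F \<in> link_flags s. ?disagree F}) = (\<Sum>F\<in>link_flags s. of_bool (?disagree F))"
    using finite_link_flags[of s] by (simp add: Int_def)
  also have "\<dots> = (\<Sum>F\<in>link_flags s. of_bool (?disagree (map_chain h F)))"
    by (rule sum.reindex_bij_betw[OF bij_betw_map_chain_link_flags[OF h], symmetric])
  also have "\<dots> \<le> (\<Sum>F\<in>link_flags s. \<Sum>k<length (TS F). of_bool (\<not> closed_at (pullback h f) (TS F ! k)))"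
    using edge_disagreement_le_failed_triangles[OF f h _ ij] TS by (intro sum_mono) blast
  finally show ?thesis .
qed

lemma sum_stabilizer_edge_disagreements_le:
  fixes f :: "('k, 'n, 'g::group_add) cochain" and R :: nat
  assumes f: "f \<in> cochains1 s I" and ij: "i \<in> I" "j \<in> I"
    and forced: "\<And>F. F \<in> link_flags s \<Longrightarrow> forced_by_triangles R
      (\<lambda>f' :: ('k, 'n, 'g) cochain. cone f' (at_dim F i) + f' (at_dim F i) (at_dim F j) = cone f' (at_dim F j))"
  shows "(\<Sum>h\<in>stabilizer s. real (card {F \<in> link_flags s.
      f (at_dim F i) (at_dim F j) \<noteq> cone_coboundary h f (at_dim F i) (at_dim F j)}))
    \<le> real R * real (card (stabilizer s)) * real (card {F \<in> link_flags s. cob_fails f F})"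
proof -
  let ?G = "stabilizer s" and ?L = "link_flags s"
  define M N W where "M = real (card ?G)" and "N = real (card ?L)"
    and "W = real (card {F \<in> ?L. cob_fails f F})"
  have "\<forall>F\<in>?L. \<exists>ts. length ts \<le> R \<and> (\<forall>t\<in>set ts. flag_triangle t) \<and>
      (\<forall>f'\<in>cochains1 s I. (\<forall>t\<in>set ts. closed_at f' t) \<longrightarrow>
        cone f' (at_dim F i) + f' (at_dim F i) (at_dim F j) = (cone f' (at_dim F j) :: 'g))"
    using forced unfolding forced_by_triangles_def by blast
  from bchoice[OF this] obtain TS where TS: "\<forall>F\<in>?L. length (TS F) \<le> R \<and> (\<forall>t\<in>set (TS F). flag_triangle t) \<and>
      (\<forall>f'\<in>cochains1 s I. (\<forall>t\<in>set (TS F). closed_at f' t) \<longrightarrow>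
        cone f' (at_dim F i) + f' (at_dim F i) (at_dim F j) = (cone f' (at_dim F j) :: 'g))" ..
  let ?failed = "\<lambda>h F. (\<Sum>k<length (TS F). of_bool (\<not> closed_at (pullback h f) (TS F ! k)) :: real)"
  have "(\<Sum>h\<in>?G. real (card {F \<in> ?L. f (at_dim F i) (at_dim F j) \<noteq> cone_coboundary h f (at_dim F i) (at_dim F j)}))
      \<le> (\<Sum>h\<in>?G. \<Sum>F\<in>?L. ?failed h F)"
    using card_edge_disagreements_le[OF f _ ij, of _ TS] TS by (intro sum_mono) blast
  also have "\<dots> = (\<Sum>F\<in>?L. \<Sum>k<length (TS F). \<Sum>h\<in>?G. of_bool (\<not> closed_at (pullback h f) (TS F ! k)))"
    by (subst sum.swap) (rule sum.cong[OF refl], rule sum.swap)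
  also have "\<dots> = (\<Sum>F\<in>?L. \<Sum>k<length (TS F). M / N * W)"
  proof (intro sum.cong refl)
    fix F k assume "F \<in> ?L" "k \<in> {..<length (TS F)}"
    then have "flag_triangle (TS F ! k)"
      using TS by auto
    then show "(\<Sum>h\<in>?G. of_bool (\<not> closed_at (pullback h f) (TS F ! k))) = M / N * W"
      unfolding M_def N_def W_def by (rule sum_stabilizer_not_closed)
  qed
  also have "\<dots> = (\<Sum>F\<in>?L. real (length (TS F)) * (M / N * W))"
    by simp
  also have "\<dots> \<le> (\<Sum>F\<in>?L. real R * (M / N * W))"
    using TS unfolding M_def N_def W_def by (intro sum_mono mult_right_mono) auto
  also have "\<dots> = real R * M * W"
    using card_link_flags_pos[OF s_chain] unfolding N_def by (simp add: card_gt_0_iff)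
  finally show ?thesis
    unfolding M_def W_def .
qed

end

lemma add_eq_imp_eq_neg_diff_neg:
  fixes x e y :: "'g::group_add"
  assumes "x + e = y"
  shows "e = -x - -y"
proof -
  have "e = -x + (x + e)"
    by (simp only: minus_add_cancel)
  also have "\<dots> = -x - -y"
    by (simp only: assms diff_minus_eq_add)
  finally show ?thesis .
qed

lemma diff_cycle_eq_0: "(a - b) + (b - c) + (c - a) = (0::'g::group_add)"
  by (simp only: diff_conv_add_uminus add.assoc minus_add_cancel right_minus)

context flags_link
begin

lemma ex_forced_cone_edge:
  assumes "i \<in> I" "j \<in> I" "i < j" and xy: "vertex i x" "vertex j y" "x \<subseteq> y"
  shows "\<exists>R. forced_by_triangles R
    (\<lambda>f :: ('k, 'n, 'g::group_add) cochain. cone f x + f x y = cone f y)"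
proof -
  consider "i = i0" "j = i1" | "i = i0" "j = i2" | "i = i1" "j = i2"
    using assms(1-3) colours by auto
  then show ?thesis
  proof cases
    case 1
    then show ?thesis
      using cone_edge01 xy by blast
  next
    case 2
    then show ?thesis
      using cone_edge02 xy by blast
  next
    case 3
    then show ?thesis
      using cone_edge12 xy by blast
  qed
qed

lemma cocycle_cone_edge:
  fixes f :: "('k, 'n, 'g::group_add) cochain"
  assumes f: "f \<in> cocycles1 s I" and "i \<in> I" "j \<in> I" "i < j" "vertex i x" "vertex j y" "x \<subseteq> y"
  shows "cone f x + f x y = cone f y"
proof -
  obtain R where "forced_by_triangles R
      (\<lambda>f :: ('k, 'n, 'g) cochain. cone f x + f x y = cone f y)"
    using ex_forced_cone_edge[OF assms(2-7)] by blast
  then obtain ts where ts: "\<forall>t\<in>set ts. flag_triangle t"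
    "\<forall>f'\<in>cochains1 s I. (\<forall>t\<in>set ts. closed_at f' t) \<longrightarrow> cone f' x + f' x y = (cone f' y :: 'g)"
    by (rule forced_by_trianglesE)
  have "closed_at f t" if "flag_triangle t" for t
    using f that link_triangleI unfolding cocycles1_def closed_at_def flag_triangle_def by auto
  then show ?thesis
    using ts f unfolding cocycles1_def by blast
qed

lemma cocycles_eq_coboundaries:
  "(cocycles1 s I :: ('k, 'n, 'g::group_add) cochain set) = coboundaries1 s I"
proof
  show "(cocycles1 s I :: ('k, 'n, 'g) cochain set) \<subseteq> coboundaries1 s I"
  proof
    fix f :: "('k, 'n, 'g) cochain"
    assume f: "f \<in> cocycles1 s I"
    then have cochain: "f \<in> cochains1 s I"
      unfolding cocycles1_def by simp
    have "f u v = (- cone f u) - (- cone f v)" if "link_edge s I u v" for u v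
      using that
    proof (cases rule: link_edgeE)
      case (1 i j)
      then show ?thesis
        by (intro add_eq_imp_eq_neg_diff_neg cocycle_cone_edge[OF f])
    next
      case (2 i j)
      then have "f v u = (- cone f v) - (- cone f u)"
        by (intro add_eq_imp_eq_neg_diff_neg cocycle_cone_edge[OF f])
      moreover have "f u v = - f v u"
        using cochain that unfolding cochains1_def by blast
      ultimately have "f u v = - ((- cone f v) - (- cone f u))"
        by (simp only:)
      then show ?thesis
        by (simp only: minus_diff_eq)
    qed
    then show "f \<in> coboundaries1 s I"
      unfolding coboundaries1_def using cochain by (auto intro!: exI[of _ "\<lambda>u. - cone f u"])
  qed
next
  show "(coboundaries1 s I :: ('k, 'n, 'g) cochain set) \<subseteq> cocycles1 s I"
  proof
    fix f :: "('k, 'n, 'g) cochain"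
    assume "f \<in> coboundaries1 s I"
    then obtain g where cochain: "f \<in> cochains1 s I"
      and g: "\<forall>u v. link_edge s I u v \<longrightarrow> f u v = g u - g v"
      unfolding coboundaries1_def by blast
    have "cob1 f u v w = 0" if "link_triangle s I u v w" for u v w
      using g link_triangle_edges[OF that] diff_cycle_eq_0 unfolding cob1_def by simp
    then show "f \<in> cocycles1 s I"
      unfolding cocycles1_def using cochain by blast
  qed
qed

lemma dist_Z1_le_edge_dist_cone_coboundary:
  "dist_Z1 s i0 i1 i2 f \<le> edge_dist s i0 i1 i2 f (cone_coboundary h f)"
proof -
  have "edge_dist s i0 i1 i2 f (cone_coboundary h f) \<in> edge_dist s i0 i1 i2 f ` cocycles1 s I"
    using cone_coboundary_cocycle by blast
  moreover have "bdd_below (edge_dist s i0 i1 i2 f ` cocycles1 s I)"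
    by (intro bdd_belowI[of _ 0]) (auto simp: edge_dist_def link_prob_def)
  ultimately show ?thesis
    unfolding dist_Z1_def by (rule cInf_lower)
qed

text \<open>The three edge types of a flag are filled by 7, 12 and 20 triangles and the edge measure
  weighs each type by 1/3, whence the constant (7 + 12 + 20) / 3 = 13.\<close>
lemma dist_Z1_le_13_wt_cob:
  fixes f :: "('k, 'n, 'g::group_add) cochain"
  assumes f: "f \<in> cochains1 s I"
  shows "dist_Z1 s i0 i1 i2 f \<le> 13 * wt_cob s i0 i1 i2 f"
proof -
  let ?G = "stabilizer s" and ?L = "link_flags s"
  define M N W where "M = real (card ?G)" and "N = real (card ?L)"
    and "W = real (card {F \<in> ?L. cob_fails f F})"
  let ?c = "\<lambda>i j h. real (card {F \<in> ?L. f (at_dim F i) (at_dim F j) \<noteq> cone_coboundary h f (at_dim F i) (at_dim F j)})"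
  have "M > 0" "N > 0"
    using card_stabilizer_pos card_link_flags_pos[OF s_chain] unfolding M_def N_def by simp_all
  note v = vertices_of_link_flag
  have e01: "(\<Sum>h\<in>?G. ?c i0 i1 h) \<le> 7 * M * W"
    using sum_stabilizer_edge_disagreements_le[OF f _ _ cone_edge01[OF v(1,2,4)]]
    unfolding M_def W_def by simp
  have e02: "(\<Sum>h\<in>?G. ?c i0 i2 h) \<le> 12 * M * W"
    using sum_stabilizer_edge_disagreements_le[OF f _ _ cone_edge02[OF v(1,3) order_trans[OF v(4,5)]]]
    unfolding M_def W_def by simp
  have e12: "(\<Sum>h\<in>?G. ?c i1 i2 h) \<le> 20 * M * W"
    using sum_stabilizer_edge_disagreements_le[OF f _ _ cone_edge12[OF v(2,3,5)]]
    unfolding M_def W_def by simp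
  have edge_dist: "edge_dist s i0 i1 i2 f (cone_coboundary h f) = (?c i0 i1 h + ?c i0 i2 h + ?c i1 i2 h) / (3 * N)"
    for h
    unfolding edge_dist_def link_prob_def N_def by (simp add: add_divide_distrib)
  have "M * dist_Z1 s i0 i1 i2 f = (\<Sum>h\<in>?G. dist_Z1 s i0 i1 i2 f)"
    unfolding M_def by simp
  also have "\<dots> \<le> (\<Sum>h\<in>?G. edge_dist s i0 i1 i2 f (cone_coboundary h f))"
    by (intro sum_mono dist_Z1_le_edge_dist_cone_coboundary)
  also have "\<dots> = ((\<Sum>h\<in>?G. ?c i0 i1 h) + (\<Sum>h\<in>?G. ?c i0 i2 h) + (\<Sum>h\<in>?G. ?c i1 i2 h)) / (3 * N)"
    unfolding edge_dist by (simp only: sum_divide_distrib[symmetric] sum.distrib)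
  also have "\<dots> \<le> (7 * M * W + 12 * M * W + 20 * M * W) / (3 * N)"
    using e01 e02 e12 \<open>N > 0\<close> by (intro divide_right_mono add_mono) auto
  also have "\<dots> = M * (13 * (W / N))"
    by (simp add: field_simps)
  finally have "dist_Z1 s i0 i1 i2 f \<le> 13 * (W / N)"
    using \<open>M > 0\<close> by (rule mult_left_le_imp_le)
  then show ?thesis
    unfolding wt_cob_def link_prob_def W_def N_def cob_fails_def by simp
qed

end

theorem lemma3p17:
  fixes s :: "('k::{field,finite} ^ 'n) set set"
    and i0 i1 i2 :: nat
  assumes d3: "CARD('n) \<ge> 3"
    and I_range: "1 \<le> i0" "i0 < i1" "i1 < i2" "i2 \<le> CARD('n) - 1"
    and s_face: "is_chain s" "\<forall>V\<in>s. vec.dim V \<notin> {i0, i1, i2}"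
    and cond1: "2 * i0 \<le> i1 \<or> (\<exists>V\<in>s. i0 < vec.dim V \<and> vec.dim V < i1)"
    and cond2: "2 * i1 - i0 \<le> i2
       \<or> (\<exists>V\<in>s. i0 < vec.dim V \<and> vec.dim V < i1 \<and> 2 * i1 - vec.dim V \<le> i2)
       \<or> (\<exists>W\<in>s. i1 < vec.dim W \<and> vec.dim W < i2)"
  shows "link_cob_expander s i0 i1 i2 TYPE('g::group_add) (1/13)"
proof -
  \<comment> \<open>d3 is implied by I_range.\<close>
  interpret flags_link s i0 i1 i2
    using I_range s_face cond1 cond2 by unfold_locales auto
  show ?thesis
    unfolding link_cob_expander_def
  proof (intro conjI allI impI)
    show "(cocycles1 s {i0, i1, i2} :: ('k, 'n, 'g) cochain set) = coboundaries1 s {i0, i1, i2}"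
      by (rule cocycles_eq_coboundaries)
    fix f :: "('k, 'n, 'g) cochain"
    assume "f \<in> cochains1 s {i0, i1, i2} \<and> f \<notin> cocycles1 s {i0, i1, i2}"
    then have "dist_Z1 s i0 i1 i2 f \<le> 13 * wt_cob s i0 i1 i2 f"
      using dist_Z1_le_13_wt_cob by blast
    then show "1 / 13 * dist_Z1 s i0 i1 i2 f \<le> wt_cob s i0 i1 i2 f"
      by linarith
  qed
qed

end
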